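(* Let $D$ be a knot diagram. If some ineffective region set for $D$ has odd cardinality, then for every crossing $c$ of $D$ the crossing change at $c$ is realized by a finite sequence of region freeze crossing changes on $D$.
   Context: A knot diagram is a regular projection of a knot into the plane with over/under information at each crossing. Regions are the connected components of the complement of the projection; a crossing touches a region $R$ if it lies on the boundary of $R$. A region crossing change at $R$ changes every crossing touching $R$ (each once); a region freeze crossing change at $R$ changes every crossing not touching $R$ and leaves those touching $R$ unchanged. For a set $\mathcal{R}$ of distinct regions, region crossing changes about $\mathcal{R}$ means applying the region crossing change at each region of $\mathcal{R}$ once. A set $\mathcal{R}^{\ast}$ of regions is ineffective for $D$ if region crossing changes about $\mathcal{R}^{\ast}$ do not change $D$ in consequence (every crossing touches an even number of regions of $\mathcal{R}^{\ast}$). A sequence of local moves realizes the crossing change at a crossing $c$ if it produces the same diagram as changing the single crossing $c$ of $D$. *)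

theory Defs
  imports Main
begin

text \<open>A knot diagram (regular projection of a knot onto the sphere/plane, with
crossing information) is encoded combinatorially as a planar 4-regular map:
a finite set of darts Dt (half-edges), a rotation permutation s (cyclic order of
the four darts at a crossing) and a fixpoint-free edge involution a.  Planarity is expressed by connectedness plus Euler's formula
V - E + F = 2; the projection being a single closed curve (a knot) is expressed
by the straight-ahead walk (s o s o a) having exactly two orbits (the two
orientations of the single strand).\<close>

definition dorbit :: "('d \<Rightarrow> 'd) \<Rightarrow> 'd \<Rightarrow> 'd set" where
  "dorbit f x = {(f ^^ n) x | n. True}"

definition crossings :: "('d \<Rightarrow> 'd) \<Rightarrow> 'd set \<Rightarrow> 'd set set" where
  "crossings s Dt = dorbit s ` Dt"

definition edges :: "('d \<Rightarrow> 'd) \<Rightarrow> 'd set \<Rightarrow> 'd set set" where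
  "edges a Dt = dorbit a ` Dt"

definition regions :: "('d \<Rightarrow> 'd) \<Rightarrow> ('d \<Rightarrow> 'd) \<Rightarrow> 'd set \<Rightarrow> 'd set set" where
  "regions s a Dt = dorbit (s \<circ> a) ` Dt"

definition knot_projection :: "'d set \<Rightarrow> ('d \<Rightarrow> 'd) \<Rightarrow> ('d \<Rightarrow> 'd) \<Rightarrow> bool" where
  "knot_projection Dt s a \<longleftrightarrow>
     finite Dt \<and> Dt \<noteq> {} \<and>
     bij_betw s Dt Dt \<and> bij_betw a Dt Dt \<and>
     (\<forall>d\<in>Dt. a (a d) = d \<and> a d \<noteq> d) \<and>
     (\<forall>d\<in>Dt. card (dorbit s d) = 4) \<and>
     (\<forall>d\<in>Dt. \<forall>e\<in>Dt. (d, e) \<in> ({(x, s x) | x. x \<in> Dt} \<union> {(x, a x) | x. x \<in> Dt})\<^sup>*) \<and>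
     int (card (crossings s Dt)) - int (card (edges a Dt)) + int (card (regions s a Dt)) = 2 \<and>
     card (dorbit (s \<circ> s \<circ> a) ` Dt) = 2"

definition touches :: "'d set \<Rightarrow> 'd set \<Rightarrow> bool" where
  "touches c r \<longleftrightarrow> c \<inter> r \<noteq> {}"

text \<open>Over/under information: a boolean per crossing.  A diagram state is
ov :: 'd set \<Rightarrow> bool (only its values on crossings matter).\<close>

definition crossing_change :: "'d set \<Rightarrow> ('d set \<Rightarrow> bool) \<Rightarrow> ('d set \<Rightarrow> bool)" where
  "crossing_change c ov = ov(c := \<not> ov c)"

definition region_cc ::
  "('d \<Rightarrow> 'd) \<Rightarrow> 'd set \<Rightarrow> 'd set \<Rightarrow> ('d set \<Rightarrow> bool) \<Rightarrow> ('d set \<Rightarrow> bool)" where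
  "region_cc s Dt r ov = (\<lambda>v. if v \<in> crossings s Dt \<and> touches v r then \<not> ov v else ov v)"

definition region_freeze_cc ::
  "('d \<Rightarrow> 'd) \<Rightarrow> 'd set \<Rightarrow> 'd set \<Rightarrow> ('d set \<Rightarrow> bool) \<Rightarrow> ('d set \<Rightarrow> bool)" where
  "region_freeze_cc s Dt r ov = (\<lambda>v. if v \<in> crossings s Dt \<and> \<not> touches v r then \<not> ov v else ov v)"

definition ineffective ::
  "'d set \<Rightarrow> ('d \<Rightarrow> 'd) \<Rightarrow> ('d \<Rightarrow> 'd) \<Rightarrow> ('d set \<Rightarrow> bool) \<Rightarrow> 'd set set \<Rightarrow> bool" where
  "ineffective Dt s a ov Rs \<longleftrightarrow> Rs \<subseteq> regions s a Dt \<and>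
     (\<forall>rs. distinct rs \<and> set rs = Rs \<longrightarrow> fold (region_cc s Dt) rs ov = ov)"

end

theory Submission
  imports Defs
begin

text \<open>Both kinds of move only toggle crossings, so a sequence of moves acts through parities.
  A region freeze crossing change at \<open>r\<close> is the region crossing change at \<open>r\<close> followed by
  changing every crossing; hence a sequence of freeze moves of even length acts like the
  corresponding region crossing changes. By Shimizu's theorem every crossing change is realized
  by region crossing changes; if that sequence has odd length, appending the regions of an odd
  ineffective set changes nothing but the parity of the length.

  Shimizu's theorem is linear algebra over GF(2). Sending a union of regions to the set of
  crossings it flips is linear on a space of dimension \<open>card R = card V + 2\<close> (Euler's formula),
  and its kernel has at most four elements, so it is onto all sets of crossings. The kernel bound
  rests on a discrete Jordan curve theorem applied to the loops the knot makes between its two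
  passes through a crossing, and on the nesting of these loops at nugatory crossings.\<close>

section \<open>Orbits of a permutation of a finite set\<close>

lemma funpow_inj_on:
  assumes "inj_on f D" "f ` D \<subseteq> D"
  shows "inj_on (f ^^ n) D"
proof (induction n)
  case (Suc n)
  have "inj_on ((f ^^ n) \<circ> f) D"
    by (rule comp_inj_on[OF assms(1) inj_on_subset[OF Suc assms(2)]])
  thus ?case by (simp only: funpow_Suc_right)
qed simp

locale perm_on =
  fixes D :: "'d set" and f :: "'d \<Rightarrow> 'd"
  assumes finite_dom: "finite D" and bij: "bij_betw f D D"
begin

lemma f_in: "x \<in> D \<Longrightarrow> f x \<in> D"
  using bij by (auto simp: bij_betw_def)

lemma inj: "inj_on f D"
  using bij by (auto simp: bij_betw_def)

lemma funpow_in: "x \<in> D \<Longrightarrow> (f ^^ n) x \<in> D"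
  by (induction n) (auto simp: f_in)

lemma funpow_cancel:
  assumes x: "x \<in> D" and ij: "i \<le> j" and eq: "(f ^^ i) x = (f ^^ j) x"
  shows "(f ^^ (j - i)) x = x"
proof -
  have "(f ^^ i) ((f ^^ (j - i)) x) = (f ^^ i) x"
    using eq ij by (metis funpow_add le_add_diff_inverse o_apply)
  moreover have "inj_on (f ^^ i) D" by (rule funpow_inj_on[OF inj]) (use f_in in blast)
  ultimately show ?thesis using x funpow_in[OF x] by (auto dest: inj_onD)
qed

lemma periodic:
  assumes x: "x \<in> D"
  shows "\<exists>m>0. (f ^^ m) x = x"
proof -
  let ?g = "\<lambda>n. (f ^^ n) x"
  have "?g ` {0..card D} \<subseteq> D" using funpow_in[OF x] by auto
  hence "card (?g ` {0..card D}) < card {0..card D}"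
    using card_mono[OF finite_dom] by (simp add: le_imp_less_Suc)
  then obtain i j where ij: "i < j" "?g i = ?g j"
    using pigeonhole[of ?g] unfolding inj_on_def by (metis linorder_neqE_nat)
  thus ?thesis using funpow_cancel[OF x _ ij(2)] by (intro exI[of _ "j - i"]) auto
qed

lemma orbit_subset: "x \<in> D \<Longrightarrow> dorbit f x \<subseteq> D"
  unfolding dorbit_def using funpow_in by auto

lemma finite_orbit: "x \<in> D \<Longrightarrow> finite (dorbit f x)"
  using finite_subset[OF orbit_subset finite_dom] .

lemma funpow_in_orbit: "(f ^^ n) x \<in> dorbit f x"
  unfolding dorbit_def by auto

lemma orbit_self: "x \<in> dorbit f x"
  using funpow_in_orbit[of 0] by simp

lemma orbit_step: "y \<in> dorbit f x \<Longrightarrow> f y \<in> dorbit f x"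
  unfolding dorbit_def by (auto intro: exI[of _ "Suc _"])

lemma orbit_subset_orbit: "y \<in> dorbit f x \<Longrightarrow> dorbit f y \<subseteq> dorbit f x"
proof
  fix z assume "y \<in> dorbit f x" "z \<in> dorbit f y"
  then obtain i j where "y = (f ^^ i) x" "z = (f ^^ j) y" unfolding dorbit_def by auto
  hence "z = (f ^^ (j + i)) x" by (simp add: funpow_add)
  thus "z \<in> dorbit f x" by (simp add: funpow_in_orbit)
qed

lemma orbit_sym:
  assumes x: "x \<in> D" and y: "y \<in> dorbit f x"
  shows "x \<in> dorbit f y"
proof -
  obtain k where k: "y = (f ^^ k) x" using y unfolding dorbit_def by auto
  obtain m where m: "m > 0" "(f ^^ m) x = x" using periodic[OF x] by auto
  have period: "(f ^^ (m * n)) x = x" for n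
    by (induction n) (use m(2) in \<open>auto simp: funpow_add\<close>)
  have "k \<le> m * (k + 1)" using m(1) by (simp add: trans_le_add2)
  hence "(f ^^ (m * (k + 1) - k)) y = (f ^^ (m * (k + 1))) x"
    unfolding k by (metis funpow_add le_add_diff_inverse2 o_apply)
  thus ?thesis using period funpow_in_orbit by metis
qed

lemma orbit_eq: "x \<in> D \<Longrightarrow> y \<in> dorbit f x \<Longrightarrow> dorbit f y = dorbit f x"
  using orbit_subset_orbit orbit_sym by blast

lemma orbit_subset_closed: "f ` Y \<subseteq> Y \<Longrightarrow> x \<in> Y \<Longrightarrow> dorbit f x \<subseteq> Y"
proof -
  assume "f ` Y \<subseteq> Y" "x \<in> Y"
  hence "(f ^^ n) x \<in> Y" for n by (induction n) auto
  thus ?thesis unfolding dorbit_def by auto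
qed

lemma closed_iff:
  assumes "f ` Y \<subseteq> Y" "x \<in> D"
  shows "f x \<in> Y \<longleftrightarrow> x \<in> Y"
  using orbit_subset_closed[OF assms(1), of "f x"] orbit_sym[OF assms(2) orbit_step[OF orbit_self]] assms(1)
  by auto

lemma orbit_disjoint:
  assumes "x \<in> D" "y \<in> D" "dorbit f x \<noteq> dorbit f y"
  shows "dorbit f x \<inter> dorbit f y = {}"
proof (rule ccontr)
  assume "dorbit f x \<inter> dorbit f y \<noteq> {}"
  then obtain z where "z \<in> dorbit f x" "z \<in> dorbit f y" by auto
  thus False using orbit_eq[of x z] orbit_eq[of y z] assms by simp
qed

lemma card_closed_subsets: "card {Y. Y \<subseteq> D \<and> f ` Y \<subseteq> Y} = 2 ^ card (dorbit f ` D)"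
proof -
  let ?O = "dorbit f ` D"
  have "bij_betw Union (Pow ?O) {Y. Y \<subseteq> D \<and> f ` Y \<subseteq> Y}"
  proof (rule bij_betwI')
    fix S T assume S: "S \<in> Pow ?O" and T: "T \<in> Pow ?O"
    have sub: "S' \<subseteq> T'" if S': "S' \<in> Pow ?O" and T': "T' \<in> Pow ?O" and eq: "\<Union>S' = \<Union>T'" for S' T'
    proof
      fix Q assume "Q \<in> S'"
      then obtain x where x: "x \<in> D" "Q = dorbit f x" "x \<in> \<Union>T'" using S' eq orbit_self by blast
      then obtain y where "y \<in> D" "dorbit f y \<in> T'" "x \<in> dorbit f y" using T' by blast
      thus "Q \<in> T'" using orbit_eq x by metis
    qed
    show "(\<Union>S = \<Union>T) = (S = T)" using sub[OF S T] sub[OF T S] by blast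
  next
    fix S assume S: "S \<in> Pow ?O"
    have "\<Union>S \<subseteq> D" using S orbit_subset by blast
    moreover have "f ` \<Union>S \<subseteq> \<Union>S"
    proof
      fix z assume "z \<in> f ` \<Union>S"
      then obtain y Q where "Q \<in> S" "y \<in> Q" "z = f y" by auto
      thus "z \<in> \<Union>S" using S orbit_step by blast
    qed
    ultimately show "\<Union>S \<in> {Y. Y \<subseteq> D \<and> f ` Y \<subseteq> Y}" by auto
  next
    fix Y assume "Y \<in> {Y. Y \<subseteq> D \<and> f ` Y \<subseteq> Y}"
    thus "\<exists>S\<in>Pow ?O. Y = \<Union>S"
      apply (intro bexI[of _ "dorbit f ` Y"])
      using orbit_subset_closed orbit_self by auto
  qed
  hence "card {Y. Y \<subseteq> D \<and> f ` Y \<subseteq> Y} = card (Pow ?O)"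
    by (simp add: bij_betw_same_card)
  thus ?thesis using finite_dom by (simp add: card_Pow)
qed

lemma card_eq_sum_orbits: "card D = (\<Sum>Q\<in>dorbit f ` D. card Q)"
proof -
  have "\<Union> (dorbit f ` D) = D" using orbit_subset orbit_self by blast
  moreover have "card (\<Union> (dorbit f ` D)) = (\<Sum>Q\<in>dorbit f ` D. card Q)"
    by (rule card_Union_disjoint)
      (auto simp: pairwise_def disjnt_def dest: orbit_disjoint intro: finite_orbit)
  ultimately show ?thesis by simp
qed

lemma orbit_enum:
  assumes x: "x \<in> D"
  obtains L where "L > 0" "(f ^^ L) x = x" "inj_on (\<lambda>j. (f ^^ j) x) {..<L}"
    "dorbit f x = (\<lambda>j. (f ^^ j) x) ` {..<L}"
proof
  define L where "L = (LEAST m. m > 0 \<and> (f ^^ m) x = x)"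
  show L: "L > 0" "(f ^^ L) x = x"
    using LeastI_ex[OF periodic[OF x]] unfolding L_def by auto
  show "inj_on (\<lambda>j. (f ^^ j) x) {..<L}"
    using inj_on_funpow_least[OF L(2)] not_less_Least unfolding L_def lessThan_atLeast0 by blast
  have "(f ^^ n) x = (f ^^ (n mod L)) x" for n
  proof -
    have "(f ^^ (L * k)) x = x" for k
      by (induction k) (use L(2) in \<open>auto simp: funpow_add\<close>)
    thus ?thesis by (metis (no_types) comp_apply div_mult_mod_eq funpow_add add.commute mult.commute)
  qed
  thus "dorbit f x = (\<lambda>j. (f ^^ j) x) ` {..<L}"
    unfolding dorbit_def using L(1) by (fastforce intro: image_eqI[of _ _ "_ mod L"])
qed

end

section \<open>Parity counting with symmetric differences\<close>

lemma odd_card_sym_diff: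
  assumes "finite A" "finite B"
  shows "odd (card (sym_diff A B)) \<longleftrightarrow> odd (card A) \<noteq> odd (card B)"
proof -
  have "card (sym_diff A B) + card (A \<inter> B) = card (A \<union> B)"
    using assms by (subst card_Un_disjoint[symmetric]) (auto intro!: arg_cong[where f=card])
  hence "card (sym_diff A B) + 2 * card (A \<inter> B) = card A + card B"
    using card_Un_Int[OF assms] by simp
  thus ?thesis by (metis dvd_add_times_triv_right_iff even_add mult_2 mult_2_right)
qed

lemma odd_card_filter_neq:
  assumes "finite S"
  shows "odd (card {v\<in>S. P v \<noteq> Q v}) \<longleftrightarrow> odd (card {v\<in>S. P v}) \<noteq> odd (card {v\<in>S. Q v})"
proof -
  have "{v\<in>S. P v \<noteq> Q v} = sym_diff {v\<in>S. P v} {v\<in>S. Q v}" by auto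
  thus ?thesis using odd_card_sym_diff[of "{v\<in>S. P v}" "{v\<in>S. Q v}"] assms by simp
qed

lemma card_fibre_eq_kernel:
  assumes closed: "\<And>A B. A \<in> G \<Longrightarrow> B \<in> G \<Longrightarrow> sym_diff A B \<in> G"
    and additive: "\<And>A B. A \<in> G \<Longrightarrow> B \<in> G \<Longrightarrow> h (sym_diff A B) = sym_diff (h A) (h B)"
    and A0: "A0 \<in> G"
  shows "card {A\<in>G. h A = h A0} = card {A\<in>G. h A = {}}"
proof -
  have "bij_betw (\<lambda>A. sym_diff A A0) {A\<in>G. h A = h A0} {A\<in>G. h A = {}}"
  proof (rule bij_betwI')
    fix A assume "A \<in> {A\<in>G. h A = h A0}"
    thus "sym_diff A A0 \<in> {A\<in>G. h A = {}}" using closed additive A0 by auto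
  next
    fix B assume B: "B \<in> {A\<in>G. h A = {}}"
    have "B = sym_diff (sym_diff B A0) A0" by blast
    moreover have "sym_diff B A0 \<in> {A\<in>G. h A = h A0}" using B closed additive A0 by auto
    ultimately show "\<exists>A\<in>{A\<in>G. h A = h A0}. B = sym_diff A A0" by blast
  qed blast
  thus ?thesis by (rule bij_betw_same_card)
qed

lemma card_preimage_eq:
  assumes "finite G"
    and closed: "\<And>A B. A \<in> G \<Longrightarrow> B \<in> G \<Longrightarrow> sym_diff A B \<in> G"
    and additive: "\<And>A B. A \<in> G \<Longrightarrow> B \<in> G \<Longrightarrow> h (sym_diff A B) = sym_diff (h A) (h B)"
    and "finite T"
  shows "card {A\<in>G. h A \<in> T} = card (T \<inter> h ` G) * card {A\<in>G. h A = {}}"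
proof -
  have "{A\<in>G. h A \<in> T} = (\<Union>y\<in>T \<inter> h ` G. {A\<in>G. h A = y})" by auto
  also have "card \<dots> = (\<Sum>y\<in>T \<inter> h ` G. card {A\<in>G. h A = y})"
    by (rule card_UN_disjoint) (use assms in auto)
  also have "\<dots> = (\<Sum>y\<in>T \<inter> h ` G. card {A\<in>G. h A = {}})"
    using card_fibre_eq_kernel[OF closed additive] by (intro sum.cong) auto
  finally show ?thesis by simp
qed

lemma card_eq_image_times_kernel:
  assumes "finite G"
    and closed: "\<And>A B. A \<in> G \<Longrightarrow> B \<in> G \<Longrightarrow> sym_diff A B \<in> G"
    and additive: "\<And>A B. A \<in> G \<Longrightarrow> B \<in> G \<Longrightarrow> h (sym_diff A B) = sym_diff (h A) (h B)"
  shows "card G = card (h ` G) * card {A\<in>G. h A = {}}"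
proof -
  have "{A\<in>G. h A \<in> h ` G} = G" by auto
  thus ?thesis using card_preimage_eq[where T = "h ` G", OF assms] assms(1) by simp
qed

lemma card_Int_four:
  assumes "distinct [x0, x1, x2, x3]"
  shows "card ({x0, x1, x2, x3} \<inter> C) =
     of_bool (x0 \<in> C) + of_bool (x1 \<in> C) + of_bool (x2 \<in> C) + of_bool (x3 \<in> C)"
  using assms by (cases "x0 \<in> C"; cases "x1 \<in> C"; cases "x2 \<in> C"; cases "x3 \<in> C")
    (auto simp: card_insert_if Int_insert_left)

section \<open>Region crossing changes as parity counts\<close>

lemma fold_toggle:
  "fold (\<lambda>r ov v. if Q v \<and> P v r then \<not> ov v else ov v) rs ov =
     (\<lambda>v. if Q v \<and> odd (length (filter (P v) rs)) then \<not> ov v else ov v)"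
  by (induction rs arbitrary: ov) (auto simp: fun_eq_iff)

lemma fold_region_cc:
  "fold (region_cc s Dt) rs ov =
     (\<lambda>v. if v \<in> crossings s Dt \<and> odd (length (filter (touches v) rs)) then \<not> ov v else ov v)"
  unfolding region_cc_def by (rule fold_toggle)

lemma fold_region_freeze_cc:
  "fold (region_freeze_cc s Dt) rs ov =
     (\<lambda>v. if v \<in> crossings s Dt \<and> odd (length (filter (\<lambda>r. \<not> touches v r) rs)) then \<not> ov v else ov v)"
  unfolding region_freeze_cc_def by (rule fold_toggle)

lemma fold_region_freeze_cc_even:
  assumes "even (length rs)"
  shows "fold (region_freeze_cc s Dt) rs ov = fold (region_cc s Dt) rs ov"
proof -
  have "length (filter (touches v) rs) + length (filter (\<lambda>r. \<not> touches v r) rs) = length rs" for v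
    by (rule sum_length_filter_compl)
  hence "odd (length (filter (\<lambda>r. \<not> touches v r) rs)) \<longleftrightarrow> odd (length (filter (touches v) rs))" for v
    using assms by (metis even_add)
  thus ?thesis unfolding fold_region_freeze_cc fold_region_cc by simp
qed

lemma ineffective_even_touches:
  assumes "ineffective Dt s a ov Rs" "distinct rl" "set rl = Rs" "v \<in> crossings s Dt"
  shows "even (length (filter (touches v) rl))"
proof -
  have "fold (region_cc s Dt) rl ov = ov" using assms(1-3) unfolding ineffective_def by auto
  thus ?thesis using fun_cong[of _ _ v] assms(4) unfolding fold_region_cc by (metis (mono_tags))
qed

lemma fold_region_cc_append_ineffective:
  assumes "ineffective Dt s a ov Rs" "distinct rl" "set rl = Rs"
  shows "fold (region_cc s Dt) (rs @ rl) ov' = fold (region_cc s Dt) rs ov'"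
  using ineffective_even_touches[OF assms] unfolding fold_region_cc by (auto simp: fun_eq_iff)

section \<open>Knot diagrams as 4-regular maps\<close>

locale knot_diagram =
  fixes Dt :: "'d set" and s a :: "'d \<Rightarrow> 'd"
  assumes knot_projection: "knot_projection Dt s a"
begin

lemma finite_darts: "finite Dt"
  and darts_nonempty: "Dt \<noteq> {}"
  and bij_s: "bij_betw s Dt Dt"
  and bij_a: "bij_betw a Dt Dt"
  and a_a: "d \<in> Dt \<Longrightarrow> a (a d) = d"
  and a_neq: "d \<in> Dt \<Longrightarrow> a d \<noteq> d"
  and card_crossing: "d \<in> Dt \<Longrightarrow> card (dorbit s d) = 4"
  and connected: "d \<in> Dt \<Longrightarrow> e \<in> Dt \<Longrightarrow>
     (d, e) \<in> ({(x, s x) | x. x \<in> Dt} \<union> {(x, a x) | x. x \<in> Dt})\<^sup>*"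
  and euler: "int (card (crossings s Dt)) - int (card (edges a Dt)) + int (card (regions s a Dt)) = 2"
  and two_strands: "card (dorbit (s \<circ> s \<circ> a) ` Dt) = 2"
  using knot_projection unfolding knot_projection_def by blast+

sublocale S: perm_on Dt s by unfold_locales (rule finite_darts, rule bij_s)
sublocale A: perm_on Dt a by unfold_locales (rule finite_darts, rule bij_a)
sublocale F: perm_on Dt "s \<circ> a"
  by unfold_locales (rule finite_darts, rule bij_betw_trans[OF bij_a bij_s])
sublocale G: perm_on Dt "s \<circ> s \<circ> a"
  by unfold_locales (rule finite_darts, metis bij_betw_trans[OF bij_betw_trans[OF bij_a bij_s] bij_s] o_assoc)

lemma s_in: "d \<in> Dt \<Longrightarrow> s d \<in> Dt" by (rule S.f_in)
lemma a_in: "d \<in> Dt \<Longrightarrow> a d \<in> Dt" by (rule A.f_in)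

abbreviation "V \<equiv> crossings s Dt"
abbreviation "R \<equiv> regions s a Dt"
abbreviation "E \<equiv> edges a Dt"
abbreviation "crossing_of \<equiv> dorbit s"
abbreviation "region_of \<equiv> dorbit (s \<circ> a)"

lemma s_order_four:
  assumes d: "d \<in> Dt"
  shows "s (s (s (s d))) = d" "distinct [d, s d, s (s d), s (s (s d))]"
    "crossing_of d = {d, s d, s (s d), s (s (s d))}"
proof -
  obtain L where L: "(s ^^ L) d = d" "inj_on (\<lambda>j. (s ^^ j) d) {..<L}"
    "crossing_of d = (\<lambda>j. (s ^^ j) d) ` {..<L}"
    using S.orbit_enum[OF d] by blast
  have "L = 4" using card_crossing[OF d] L(2,3) by (simp add: card_image)
  moreover have "{..<(4::nat)} = {0, 1, 2, 3}" by auto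
  ultimately show "s (s (s (s d))) = d" "crossing_of d = {d, s d, s (s d), s (s (s d))}"
    "distinct [d, s d, s (s d), s (s (s d))]"
    using L by (simp_all add: numeral_eq_Suc inj_on_def)
qed

lemma crossing_of_in: "d \<in> Dt \<Longrightarrow> crossing_of d \<in> V"
  unfolding crossings_def by auto

lemma crossing_eq_crossing_of: "v \<in> V \<Longrightarrow> d \<in> v \<Longrightarrow> v = crossing_of d"
  unfolding crossings_def using S.orbit_eq by auto

lemma crossing_subset: "v \<in> V \<Longrightarrow> v \<subseteq> Dt"
  unfolding crossings_def using S.orbit_subset by auto

lemma finite_crossing: "v \<in> V \<Longrightarrow> finite v"
  using crossing_subset finite_darts finite_subset by blast

lemma finite_crossings: "finite V"
  unfolding crossings_def using finite_darts by simp

lemma finite_regions: "finite R"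
  unfolding regions_def using finite_darts by simp

lemma card_darts_crossings: "card Dt = 4 * card V"
proof -
  have "card Dt = (\<Sum>Q\<in>crossing_of ` Dt. card Q)" by (rule S.card_eq_sum_orbits)
  also have "\<dots> = (\<Sum>Q\<in>crossing_of ` Dt. 4)" using card_crossing by (intro sum.cong) auto
  finally show ?thesis unfolding crossings_def by simp
qed

lemma card_darts_edges: "card Dt = 2 * card E"
proof -
  have "dorbit a d = {d, a d}" if d: "d \<in> Dt" for d
  proof -
    have "(a ^^ n) d \<in> {d, a d}" for n
      by (induction n) (use a_a[OF d] in auto)
    thus ?thesis using A.orbit_self A.orbit_step[OF A.orbit_self] unfolding dorbit_def by auto
  qed
  hence "card Q = 2" if "Q \<in> dorbit a ` Dt" for Q
    using that a_neq by (fastforce simp: card_insert_if)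
  hence "(\<Sum>Q\<in>dorbit a ` Dt. card Q) = (\<Sum>Q\<in>dorbit a ` Dt. 2)" by (intro sum.cong) auto
  thus ?thesis using A.card_eq_sum_orbits unfolding edges_def by simp
qed

lemma card_regions: "card R = card V + 2"
  using euler card_darts_crossings card_darts_edges by simp

subsection \<open>Chains over GF(2) and the Jordan curve theorem\<close>

text \<open>Sets of darts closed under \<open>s \<circ> a\<close> are the unions of regions (2-chains over GF(2)),
  sets closed under \<open>a\<close> the unions of edges (1-chains); \<open>boundary\<close> and \<open>odd_degree\<close> are the
  two boundary maps, with symmetric difference as addition.\<close>

definition region_unions where "region_unions = {Y. Y \<subseteq> Dt \<and> (s \<circ> a) ` Y \<subseteq> Y}"
definition edge_unions where "edge_unions = {C. C \<subseteq> Dt \<and> a ` C \<subseteq> C}"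
definition boundary where "boundary Y = {d\<in>Dt. (d \<in> Y) \<noteq> (a d \<in> Y)}"
definition odd_degree where "odd_degree C = {v \<in> V. odd (card (C \<inter> v))}"

lemma card_region_unions: "card region_unions = 2 ^ card R"
  unfolding region_unions_def regions_def by (rule F.card_closed_subsets)

lemma card_edge_unions: "card edge_unions = 2 ^ card E"
  unfolding edge_unions_def edges_def by (rule A.card_closed_subsets)

lemma finite_region_unions: "finite region_unions"
  unfolding region_unions_def using finite_darts by simp

lemma finite_edge_unions: "finite edge_unions"
  unfolding edge_unions_def using finite_darts by simp

lemma region_unions_subset: "Y \<in> region_unions \<Longrightarrow> Y \<subseteq> Dt"
  unfolding region_unions_def by auto

lemma edge_unions_subset: "C \<in> edge_unions \<Longrightarrow> C \<subseteq> Dt"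
  unfolding edge_unions_def by auto

lemma region_unions_s_a: "Y \<in> region_unions \<Longrightarrow> d \<in> Dt \<Longrightarrow> s (a d) \<in> Y \<longleftrightarrow> d \<in> Y"
  unfolding region_unions_def using F.closed_iff[of _ d] by auto

lemma region_unions_a_s: "Y \<in> region_unions \<Longrightarrow> d \<in> Dt \<Longrightarrow> a d \<in> Y \<longleftrightarrow> s d \<in> Y"
  using region_unions_s_a[of Y "a d"] a_a a_in by simp

lemma region_unions_sym_diff:
  "Y \<in> region_unions \<Longrightarrow> Z \<in> region_unions \<Longrightarrow> sym_diff Y Z \<in> region_unions"
  unfolding region_unions_def using F.closed_iff by (auto simp: image_subset_iff)

lemma edge_unions_sym_diff: "C \<in> edge_unions \<Longrightarrow> L \<in> edge_unions \<Longrightarrow> sym_diff C L \<in> edge_unions"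
  unfolding edge_unions_def using A.closed_iff by (auto simp: image_subset_iff)

lemma region_unions_compl: "Y \<in> region_unions \<Longrightarrow> Dt - Y \<in> region_unions"
  unfolding region_unions_def using F.closed_iff F.f_in by auto

lemma region_unions_same_region:
  assumes "Y \<in> region_unions" "d \<in> Dt" "e \<in> Dt" "region_of d = region_of e"
  shows "d \<in> Y \<longleftrightarrow> e \<in> Y"
proof -
  have "(s \<circ> a) ` Y \<subseteq> Y" using assms(1) unfolding region_unions_def by auto
  thus ?thesis using F.orbit_subset_closed F.orbit_self assms(4) by blast
qed

lemma boundary_sym_diff: "boundary (sym_diff Y Z) = sym_diff (boundary Y) (boundary Z)"
  unfolding boundary_def by auto

lemma boundary_compl: "Y \<subseteq> Dt \<Longrightarrow> boundary (Dt - Y) = boundary Y"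
  unfolding boundary_def using a_in by auto

lemma boundary_edge_unions: "boundary Y \<in> edge_unions"
  unfolding boundary_def edge_unions_def using a_a a_in by auto

lemma boundary_iff_s: "Y \<in> region_unions \<Longrightarrow> d \<in> Dt \<Longrightarrow> d \<in> boundary Y \<longleftrightarrow> (d \<in> Y) \<noteq> (s d \<in> Y)"
  unfolding boundary_def using region_unions_a_s by auto

lemma odd_degree_boundary:
  assumes Y: "Y \<in> region_unions"
  shows "odd_degree (boundary Y) = {}"
proof -
  have "even (card (boundary Y \<inter> crossing_of d))" if d: "d \<in> Dt" for d
  proof -
    have "card (boundary Y \<inter> crossing_of d) = of_bool (d \<in> boundary Y) + of_bool (s d \<in> boundary Y)
        + of_bool (s (s d) \<in> boundary Y) + of_bool (s (s (s d)) \<in> boundary Y)"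
      using card_Int_four[OF s_order_four(2)[OF d]] s_order_four(3)[OF d] by (simp add: Int_commute)
    thus ?thesis
      using boundary_iff_s[OF Y] d s_in s_order_four(1)[OF d]
      by (cases "d \<in> Y"; cases "s d \<in> Y"; cases "s (s d) \<in> Y"; cases "s (s (s d)) \<in> Y") auto
  qed
  thus ?thesis unfolding odd_degree_def crossings_def by auto
qed

lemma closed_s_a_eq_darts:
  assumes "s ` Y \<subseteq> Y" "a ` Y \<subseteq> Y" "d \<in> Y" "d \<in> Dt"
  shows "Dt \<subseteq> Y"
proof
  fix e assume "e \<in> Dt"
  with assms(4) have "(d, e) \<in> ({(x, s x) | x. x \<in> Dt} \<union> {(x, a x) | x. x \<in> Dt})\<^sup>*"
    by (rule connected)
  thus "e \<in> Y" by (induction rule: rtrancl_induct) (use assms in auto)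
qed

lemma boundary_empty:
  assumes Y: "Y \<in> region_unions" "boundary Y = {}"
  shows "Y = {} \<or> Y = Dt"
proof (cases "Y = {}")
  case False
  then obtain d where d: "d \<in> Y" by auto
  have sub: "Y \<subseteq> Dt" using Y region_unions_subset by auto
  have "a ` Y \<subseteq> Y" using Y sub unfolding boundary_def by auto
  moreover have "s ` Y \<subseteq> Y" using calculation region_unions_a_s[OF Y(1)] sub by auto
  ultimately show ?thesis using closed_s_a_eq_darts[of Y d] sub d by auto
qed simp

lemma card_boundary_kernel: "card {Y\<in>region_unions. boundary Y = {}} \<le> 2"
proof -
  have "card {Y\<in>region_unions. boundary Y = {}} \<le> card {{}, Dt}"
    by (rule card_mono) (use boundary_empty in auto)
  also have "\<dots> \<le> 2" by (simp add: card_insert_if)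
  finally show ?thesis .
qed

lemma odd_degree_sym_diff:
  assumes "C \<subseteq> Dt" "L \<subseteq> Dt"
  shows "odd_degree (sym_diff C L) = sym_diff (odd_degree C) (odd_degree L)"
proof -
  have "odd (card (sym_diff C L \<inter> v)) \<longleftrightarrow> odd (card (C \<inter> v)) \<noteq> odd (card (L \<inter> v))"
    if v: "v \<in> V" for v
  proof -
    have "sym_diff C L \<inter> v = sym_diff (C \<inter> v) (L \<inter> v)" by auto
    thus ?thesis using odd_card_sym_diff[of "C \<inter> v" "L \<inter> v"] finite_crossing[OF v] by simp
  qed
  thus ?thesis unfolding odd_degree_def by blast
qed

lemma odd_degree_image_sym_diff:
  assumes "S \<in> odd_degree ` edge_unions" "T \<in> odd_degree ` edge_unions"
  shows "sym_diff S T \<in> odd_degree ` edge_unions"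
proof -
  obtain C L where CL: "C \<in> edge_unions" "L \<in> edge_unions" "S = odd_degree C" "T = odd_degree L"
    using assms by auto
  hence "sym_diff S T = odd_degree (sym_diff C L)" using odd_degree_sym_diff edge_unions_subset by auto
  thus ?thesis using edge_unions_sym_diff[OF CL(1,2)] by auto
qed

lemma empty_odd_degree_image: "{} \<in> odd_degree ` edge_unions"
proof -
  have "odd_degree {} = {}" "{} \<in> edge_unions" unfolding odd_degree_def edge_unions_def by auto
  thus ?thesis by (metis image_eqI)
qed

lemma odd_degree_edge:
  assumes y: "y \<in> Dt"
  shows "odd_degree {y, a y} = sym_diff {crossing_of y} {crossing_of (a y)}"
proof (intro set_eqI iffI)
  fix v
  assume "v \<in> odd_degree {y, a y}"
  hence v: "v \<in> V" and odd: "odd (card ({y, a y} \<inter> v))" unfolding odd_degree_def by auto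
  have "{y, a y} \<inter> v \<noteq> {}" "{y, a y} \<inter> v \<noteq> {y, a y}"
    using odd a_neq[OF y] by (metis card.empty odd_card_imp_not_empty,
        metis card_2_iff even_numeral)
  thus "v \<in> sym_diff {crossing_of y} {crossing_of (a y)}"
    using crossing_eq_crossing_of[OF v] S.orbit_self by blast
next
  fix v
  assume sd: "v \<in> sym_diff {crossing_of y} {crossing_of (a y)}"
  hence v: "v \<in> V" using crossing_of_in y a_in by auto
  have "{y, a y} \<inter> v = {y} \<or> {y, a y} \<inter> v = {a y}"
    using sd crossing_eq_crossing_of[OF v] S.orbit_self by auto
  thus "v \<in> odd_degree {y, a y}" unfolding odd_degree_def using v by auto
qed

lemma odd_degree_image_pair:
  assumes d: "d \<in> Dt" and e: "e \<in> Dt"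
  shows "sym_diff {crossing_of d} {crossing_of e} \<in> odd_degree ` edge_unions"
proof -
  have "(d, e) \<in> ({(x, s x) | x. x \<in> Dt} \<union> {(x, a x) | x. x \<in> Dt})\<^sup>*" using connected d e .
  thus ?thesis
  proof (induction rule: rtrancl_induct)
    case base
    show ?case using empty_odd_degree_image by simp
  next
    case (step y z)
    have y: "y \<in> Dt" using step(2) by auto
    have "sym_diff {crossing_of y} {crossing_of z} \<in> odd_degree ` edge_unions"
    proof (cases "z = s y")
      case True
      hence "crossing_of z = crossing_of y" using S.orbit_eq[OF y] S.orbit_step[OF S.orbit_self] by simp
      thus ?thesis using empty_odd_degree_image by simp
    next
      case False
      hence "z = a y" using step(2) by auto
      moreover have "{y, a y} \<in> edge_unions" unfolding edge_unions_def using y a_in a_a by auto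
      ultimately show ?thesis using odd_degree_edge[OF y] by (metis image_eqI)
    qed
    moreover have "sym_diff (sym_diff {crossing_of d} {crossing_of y}) (sym_diff {crossing_of y} {crossing_of z})
        = sym_diff {crossing_of d} {crossing_of z}" by blast
    ultimately show ?case using odd_degree_image_sym_diff step(3) by metis
  qed
qed

lemma odd_degree_image_even: "S \<subseteq> V \<Longrightarrow> even (card S) \<Longrightarrow> S \<in> odd_degree ` edge_unions"
proof (induction "card S" arbitrary: S rule: less_induct)
  case less
  show ?case
  proof (cases "S = {}")
    case True
    thus ?thesis using empty_odd_degree_image by simp
  next
    case False
    have fin: "finite S" using less(2) finite_crossings finite_subset by blast
    obtain u where u: "u \<in> S" using False by auto
    moreover have "S \<noteq> {u}" using less(3) by auto
    ultimately obtain w where uw: "u \<in> S" "w \<in> S" "u \<noteq> w" by blast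
    let ?S' = "S - {u, w}"
    have "card ?S' = card S - 2" using uw fin by (simp add: card_Diff_subset)
    moreover have "card {u, w} \<le> card S" using uw fin by (intro card_mono) auto
    ultimately have "card ?S' < card S" "even (card ?S')" using less(3) uw(3) by auto
    hence "?S' \<in> odd_degree ` edge_unions" using less(1)[of ?S'] less(2) by auto
    moreover obtain d e where "d \<in> Dt" "u = crossing_of d" "e \<in> Dt" "w = crossing_of e"
      using uw less(2) unfolding crossings_def by blast
    hence "sym_diff {u} {w} \<in> odd_degree ` edge_unions" using odd_degree_image_pair by simp
    ultimately have "sym_diff ?S' (sym_diff {u} {w}) \<in> odd_degree ` edge_unions"
      by (rule odd_degree_image_sym_diff)
    moreover have "sym_diff ?S' (sym_diff {u} {w}) = S" using uw by auto
    ultimately show ?thesis by simp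
  qed
qed

lemma card_odd_degree_image: "2 ^ card V \<le> 2 * card (odd_degree ` edge_unions)"
proof -
  obtain v0 where v0: "v0 \<in> V" using darts_nonempty crossing_of_in by blast
  let ?I = "odd_degree ` edge_unions"
  have "Pow V \<subseteq> ?I \<union> (\<lambda>T. sym_diff T {v0}) ` ?I"
  proof
    fix S assume S: "S \<in> Pow V"
    have fin: "finite S" using S finite_crossings finite_subset by auto
    show "S \<in> ?I \<union> (\<lambda>T. sym_diff T {v0}) ` ?I"
    proof (cases "even (card S)")
      case True thus ?thesis using odd_degree_image_even S by auto
    next
      case False
      let ?T = "sym_diff S {v0}"
      have "?T \<subseteq> V" using S v0 by auto
      moreover have "even (card ?T)" using odd_card_sym_diff[OF fin, of "{v0}"] False by simp
      ultimately have "?T \<in> ?I" by (rule odd_degree_image_even)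
      moreover have "S = sym_diff ?T {v0}" by auto
      ultimately show ?thesis by blast
    qed
  qed
  hence "card (Pow V) \<le> card (?I \<union> (\<lambda>T. sym_diff T {v0}) ` ?I)"
    by (intro card_mono) (use finite_edge_unions in auto)
  also have "\<dots> \<le> card ?I + card ((\<lambda>T. sym_diff T {v0}) ` ?I)" by (rule card_Un_le)
  also have "\<dots> \<le> card ?I + card ?I" using finite_edge_unions by (simp add: card_image_le)
  finally show ?thesis using finite_crossings by (simp add: card_Pow)
qed

text \<open>A discrete Jordan curve theorem. Counting dimensions over GF(2), with Euler's formula in
  the form \<open>card R = card V + 2\<close>, the boundaries of unions of regions exhaust the even cycles.\<close>

lemma even_cycle_is_boundary:
  assumes "C \<in> edge_unions" "odd_degree C = {}"
  shows "\<exists>Y\<in>region_unions. boundary Y = C"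
proof -
  let ?Z = "{C\<in>edge_unions. odd_degree C = {}}"
  let ?B = "boundary ` region_unions"
  have "card region_unions = card ?B * card {Y\<in>region_unions. boundary Y = {}}"
    by (rule card_eq_image_times_kernel[OF finite_region_unions region_unions_sym_diff boundary_sym_diff])
  hence B: "2 ^ card R \<le> 2 * card ?B"
    using mult_le_mono2[OF card_boundary_kernel] card_region_unions by (metis mult.commute)
  have "card ?Z * 2 ^ card V \<le> card ?Z * (2 * card (odd_degree ` edge_unions))"
    using card_odd_degree_image by (rule mult_le_mono2)
  also have "\<dots> = 2 * card edge_unions"
    by (simp add: card_eq_image_times_kernel[OF finite_edge_unions edge_unions_sym_diff
          odd_degree_sym_diff[OF edge_unions_subset edge_unions_subset]])
  finally have "card ?Z * 2 ^ card V \<le> 2 * 2 ^ card E" by (simp add: card_edge_unions)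
  hence "card ?Z * 2 ^ card V * 2 ^ card R \<le> 2 * 2 ^ card E * (2 * card ?B)"
    using B by (rule mult_le_mono)
  also have "\<dots> = 2 ^ (card E + 2) * card ?B" by (simp add: power_add)
  also have "card E + 2 = card V + card R"
    using card_regions card_darts_crossings card_darts_edges by simp
  finally have "card ?Z * 2 ^ (card V + card R) \<le> card ?B * 2 ^ (card V + card R)"
    by (simp add: power_add mult.commute mult.left_commute)
  hence "card ?Z \<le> card ?B" by simp
  moreover have "?B \<subseteq> ?Z" using boundary_edge_unions odd_degree_boundary by auto
  ultimately have "?B = ?Z" using finite_edge_unions by (simp add: card_seteq)
  hence "C \<in> ?B" using assms by simp
  thus ?thesis by (auto simp: image_iff)
qed

subsection \<open>The strand and its tour\<close>

text \<open>The straight-ahead walk \<open>s \<circ> s \<circ> a\<close> traverses the knot; its two orbits are the two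
  orientations of the single strand.\<close>

abbreviation "straight \<equiv> s \<circ> s \<circ> a"

lemma straight_in: "d \<in> Dt \<Longrightarrow> straight d \<in> Dt"
  by (rule G.f_in)

lemma s_s_neq: "d \<in> Dt \<Longrightarrow> s (s d) \<noteq> d"
  using s_order_four(2) by fastforce

lemma straight_a_straight: "d \<in> Dt \<Longrightarrow> straight (a (straight d)) = a d"
  using a_a[OF s_in[OF s_in[OF a_in]]] s_order_four(1)[OF a_in] by simp

text \<open>The walk never turns back: if \<open>a d = straight\<^sup>c d\<close>, reading the walk from both ends
  meets in the middle, where \<open>a\<close> would have a fixed point or \<open>s \<circ> s\<close> would.\<close>

lemma a_notin_straight_orbit:
  assumes d: "d \<in> Dt"
  shows "a d \<notin> dorbit straight d"
proof
  assume "a d \<in> dorbit straight d"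
  then obtain c where c: "a d = (straight ^^ c) d" unfolding dorbit_def by auto
  have mirror: "a ((straight ^^ j) d) = (straight ^^ (c - j)) d" if "j \<le> c" for j
    using that
  proof (induction j)
    case 0 thus ?case using c by (simp only: funpow_0 diff_zero)
  next
    case (Suc j)
    let ?z = "(straight ^^ j) d"
    have z: "?z \<in> Dt" using G.funpow_in[OF d] .
    have IH: "a ?z = (straight ^^ (c - j)) d" using Suc.IH[OF Suc_leD[OF Suc.prems]] .
    have "c - j = Suc (c - Suc j)" using Suc(2) by simp
    hence "straight (a (straight ?z)) = straight ((straight ^^ (c - Suc j)) d)"
      using straight_a_straight[OF z] IH by simp
    hence "a (straight ?z) = (straight ^^ (c - Suc j)) d"
      using G.inj a_in[OF straight_in[OF z]] G.funpow_in[OF d] unfolding inj_on_def by blast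
    moreover have "(straight ^^ Suc j) d = straight ?z" by (simp only: funpow.simps(2) o_apply)
    ultimately show ?case by (simp only:)
  qed
  let ?x = "(straight ^^ (c div 2)) d"
  have x: "?x \<in> Dt" using G.funpow_in[OF d] .
  show False
  proof (cases "even c")
    case True
    hence "a ?x = ?x" using mirror[of "c div 2"] by (simp add: div_le_dividend)
        (metis True add_diff_cancel_right' dvd_mult_div_cancel mult_2)
    thus False using a_neq[OF x] by simp
  next
    case False
    hence "c - c div 2 = Suc (c div 2)" by presburger
    hence "a ?x = s (s (a ?x))" using mirror[of "c div 2"] by simp
    thus False using s_s_neq[OF a_in[OF x]] by simp
  qed
qed

definition base_dart where "base_dart = (SOME d. d \<in> Dt)"

lemma base_dart: "base_dart \<in> Dt"
  unfolding base_dart_def using darts_nonempty by (simp add: some_in_eq)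

abbreviation "strand \<equiv> dorbit straight base_dart"

lemma strand_subset: "strand \<subseteq> Dt"
  using G.orbit_subset[OF base_dart] .

lemma straight_in_strand_iff: "d \<in> Dt \<Longrightarrow> straight d \<in> strand \<longleftrightarrow> d \<in> strand"
  using G.closed_iff G.orbit_step by blast

lemma a_in_strand_iff:
  assumes d: "d \<in> Dt"
  shows "a d \<in> strand \<longleftrightarrow> d \<notin> strand"
proof (cases "d \<in> strand")
  case True
  hence "dorbit straight d = strand" using G.orbit_eq[OF base_dart] by simp
  thus ?thesis using a_notin_straight_orbit[OF d] True by simp
next
  case False
  have "a d \<in> strand"
  proof (rule ccontr)
    assume "a d \<notin> strand"
    hence "card {strand, dorbit straight d, dorbit straight (a d)} = 3"
      using False a_notin_straight_orbit[OF d] G.orbit_self by (auto simp: card_insert_if)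
    moreover have "{strand, dorbit straight d, dorbit straight (a d)} \<subseteq> dorbit straight ` Dt"
      using d a_in[OF d] base_dart by auto
    ultimately have "3 \<le> card (dorbit straight ` Dt)"
      using finite_darts by (metis card_mono finite_imageI)
    thus False using two_strands by simp
  qed
  thus ?thesis using False by simp
qed

lemma s_s_in_strand_iff:
  assumes d: "d \<in> Dt"
  shows "s (s d) \<in> strand \<longleftrightarrow> d \<notin> strand"
proof -
  have "s (s d) = straight (a d)" using a_a[OF d] by simp
  thus ?thesis using straight_in_strand_iff[OF a_in[OF d]] a_in_strand_iff[OF d] by simp
qed

definition tour_len where "tour_len = card strand"
definition tour where "tour j = (straight ^^ j) base_dart"

lemma tour_enum: "tour_len > 0" "tour tour_len = base_dart" "inj_on tour {..<tour_len}"
  "strand = tour ` {..<tour_len}"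
proof -
  obtain L where L: "L > 0" "(straight ^^ L) base_dart = base_dart"
    "inj_on (\<lambda>j. (straight ^^ j) base_dart) {..<L}"
    "strand = (\<lambda>j. (straight ^^ j) base_dart) ` {..<L}"
    using G.orbit_enum[OF base_dart] by blast
  have "tour_len = L" unfolding tour_len_def using L(3,4) by (simp add: card_image)
  thus "tour_len > 0" "tour tour_len = base_dart" "inj_on tour {..<tour_len}"
    "strand = tour ` {..<tour_len}"
    using L unfolding tour_def by (auto simp: comp_def)
qed

lemma tour_in_strand: "tour j \<in> strand"
  unfolding tour_def by (rule G.funpow_in_orbit)

lemma tour_in_darts: "tour j \<in> Dt"
  using tour_in_strand strand_subset by auto

lemma tour_Suc: "tour (Suc j) = straight (tour j)"
  unfolding tour_def by simp

lemma tour_inj: "i < tour_len \<Longrightarrow> j < tour_len \<Longrightarrow> tour i = tour j \<Longrightarrow> i = j"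
  using tour_enum(3) unfolding inj_on_def by blast

lemma strand_tour: "d \<in> strand \<Longrightarrow> \<exists>j<tour_len. d = tour j"
  using tour_enum(4) by auto

lemma a_tour_notin_strand: "a (tour j) \<notin> strand"
  using a_in_strand_iff[OF tour_in_darts] tour_in_strand by simp

lemma dart_cases: "d \<in> Dt \<Longrightarrow> (\<exists>j<tour_len. d = tour j) \<or> (\<exists>j<tour_len. d = a (tour j))"
  using strand_tour a_in_strand_iff a_a by metis

definition next_pos where "next_pos j = (if Suc j = tour_len then 0 else Suc j)"
definition prev_pos where "prev_pos j = (if j = 0 then tour_len - 1 else j - 1)"

lemma next_pos_Suc: "Suc j < tour_len \<Longrightarrow> next_pos j = Suc j"
  unfolding next_pos_def by simp

lemma tour_next_pos: "tour (next_pos j) = straight (tour j)"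
proof (cases "Suc j = tour_len")
  case True
  have "tour 0 = tour tour_len" using tour_enum(2) by (simp add: tour_def)
  thus ?thesis using True tour_Suc[of j] unfolding next_pos_def by simp
qed (use tour_Suc[of j] in \<open>simp add: next_pos_def\<close>)

lemma next_pos_less: "j < tour_len \<Longrightarrow> next_pos j < tour_len"
  unfolding next_pos_def by auto

lemma prev_pos_less: "j < tour_len \<Longrightarrow> prev_pos j < tour_len"
  unfolding prev_pos_def using tour_enum(1) by auto

lemma next_prev_pos: "j < tour_len \<Longrightarrow> next_pos (prev_pos j) = j"
  unfolding next_pos_def prev_pos_def using tour_enum(1) by auto

lemma a_tour: "a (tour j) = s (s (tour (next_pos j)))"
  using tour_next_pos s_order_four(1)[OF a_in[OF tour_in_darts]] by simp

lemma s_s_tour: "j < tour_len \<Longrightarrow> s (s (tour j)) = a (tour (prev_pos j))"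
  using a_tour[of "prev_pos j"] next_prev_pos by simp

text \<open>Of the opposite corners \<open>g, s (s g)\<close> of a crossing exactly one lies on the strand, and
  likewise for \<open>s g, s (s (s g))\<close>; so the tour passes each crossing exactly twice.\<close>

lemma two_passes:
  assumes v: "v \<in> V"
  obtains p q where "p < q" "q < tour_len" "{j. j < tour_len \<and> tour j \<in> v} = {p, q}"
proof -
  obtain g where g: "g \<in> Dt" "v = crossing_of g" using v unfolding crossings_def by auto
  have vg: "v = {g, s g, s (s g), s (s (s g))}" using g s_order_four(3) by simp
  have dist: "distinct [g, s g, s (s g), s (s (s g))]" using s_order_four(2)[OF g(1)] .
  obtain x where x: "x \<in> {g, s (s g)}" "x \<in> strand" "\<forall>y\<in>{g, s (s g)}. y \<in> strand \<longrightarrow> y = x"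
    using s_s_in_strand_iff[OF g(1)] by (cases "g \<in> strand") auto
  obtain y where y: "y \<in> {s g, s (s (s g))}" "y \<in> strand" "\<forall>z\<in>{s g, s (s (s g))}. z \<in> strand \<longrightarrow> z = y"
    using s_s_in_strand_iff[OF s_in[OF g(1)]] by (cases "s g \<in> strand") auto
  obtain i where i: "i < tour_len" "x = tour i" using strand_tour x(2) by blast
  obtain k where k: "k < tour_len" "y = tour k" using strand_tour y(2) by blast
  have "i \<noteq> k" using x(1) y(1) dist i k by auto
  moreover have "{j. j < tour_len \<and> tour j \<in> v} = {i, k}"
  proof -
    have "\<forall>d\<in>v. d \<in> strand \<longleftrightarrow> d = x \<or> d = y" using x y vg by auto
    hence "tour j \<in> v \<longleftrightarrow> tour j = x \<or> tour j = y" for j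
      using tour_in_strand x(1) y(1) vg by blast
    thus ?thesis using tour_inj i k by auto
  qed
  ultimately show ?thesis using that i k by (metis insert_commute linorder_neqE_nat)
qed

definition pass1 where "pass1 v = Min {j. j < tour_len \<and> tour j \<in> v}"
definition pass2 where "pass2 v = Max {j. j < tour_len \<and> tour j \<in> v}"

lemma passes:
  assumes v: "v \<in> V"
  shows "pass1 v < pass2 v" "pass2 v < tour_len"
    "\<And>j. j < tour_len \<Longrightarrow> tour j \<in> v \<longleftrightarrow> j = pass1 v \<or> j = pass2 v"
proof -
  obtain p q where pq: "p < q" "q < tour_len" "{j. j < tour_len \<and> tour j \<in> v} = {p, q}"
    using two_passes[OF v] .
  hence "pass1 v = p" "pass2 v = q" unfolding pass1_def pass2_def by auto
  thus "pass1 v < pass2 v" "pass2 v < tour_len"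
    "\<And>j. j < tour_len \<Longrightarrow> tour j \<in> v \<longleftrightarrow> j = pass1 v \<or> j = pass2 v"
    using pq by auto
qed

lemma passes_less: "v \<in> V \<Longrightarrow> pass1 v < tour_len" "v \<in> V \<Longrightarrow> pass2 v < tour_len"
  using passes(1,2) by (auto intro: less_trans)

lemma tour_pass1: "v \<in> V \<Longrightarrow> tour (pass1 v) \<in> v"
  using passes passes_less by blast

lemma tour_pass2: "v \<in> V \<Longrightarrow> tour (pass2 v) \<in> v"
  using passes by blast

lemma crossing_eq_pass1: "v \<in> V \<Longrightarrow> v = crossing_of (tour (pass1 v))"
  using crossing_eq_crossing_of tour_pass1 by blast

lemma crossings_disjoint: "v \<in> V \<Longrightarrow> w \<in> V \<Longrightarrow> d \<in> v \<Longrightarrow> d \<in> w \<Longrightarrow> v = w"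
  using crossing_eq_crossing_of by metis

lemma passes_distinct:
  assumes "v \<in> V" "u \<in> V" "u \<noteq> v"
  shows "pass1 u \<noteq> pass1 v" "pass1 u \<noteq> pass2 v" "pass2 u \<noteq> pass1 v" "pass2 u \<noteq> pass2 v"
  using crossings_disjoint[OF assms(1,2)] assms(3) tour_pass1 tour_pass2 assms(1,2) by metis+

lemma tour_pass2_cases:
  assumes v: "v \<in> V"
  shows "tour (pass2 v) = s (tour (pass1 v)) \<or> tour (pass2 v) = s (s (s (tour (pass1 v))))"
proof -
  let ?x = "tour (pass1 v)"
  have x: "?x \<in> Dt" by (rule tour_in_darts)
  have "tour (pass2 v) \<in> {?x, s ?x, s (s ?x), s (s (s ?x))}"
    using tour_pass2[OF v] crossing_eq_pass1[OF v] s_order_four(3)[OF x] by simp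
  moreover have "tour (pass2 v) \<noteq> ?x" using passes[OF v] tour_inj by (metis less_trans nat_neq_iff)
  moreover have "tour (pass2 v) \<noteq> s (s ?x)" using s_s_in_strand_iff[OF x] tour_in_strand by metis
  ultimately show ?thesis by auto
qed

subsection \<open>Loops and lobes\<close>

text \<open>Between its two passes through a crossing \<open>w\<close> the tour runs along a closed curve, the
  \<open>loop\<close> of \<open>w\<close>. By the Jordan curve theorem it bounds a union of regions; of its two sides,
  the \<open>lobe\<close> is the one meeting \<open>w\<close> in the single corner \<open>lobe_corner w\<close>.\<close>

definition loop where
  "loop w = (\<Union>j\<in>{pass1 w..<pass2 w}. {tour j, a (tour j)})"

lemma tour_in_loop_iff:
  assumes w: "w \<in> V" and j: "j < tour_len"
  shows "tour j \<in> loop w \<longleftrightarrow> pass1 w \<le> j \<and> j < pass2 w"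
proof -
  have "tour j \<noteq> a (tour i)" for i using a_tour_notin_strand tour_in_strand by metis
  moreover have "tour j = tour i \<longleftrightarrow> i = j" if "i < pass2 w" for i
    using tour_inj j that passes(2)[OF w] by (metis less_trans)
  ultimately show ?thesis unfolding loop_def by auto
qed

lemma a_tour_in_loop_iff:
  assumes w: "w \<in> V" and j: "j < tour_len"
  shows "a (tour j) \<in> loop w \<longleftrightarrow> pass1 w \<le> j \<and> j < pass2 w"
proof -
  have "a (tour j) \<noteq> tour i" for i using a_tour_notin_strand tour_in_strand by metis
  moreover have "a (tour j) = a (tour i) \<longleftrightarrow> i = j" if "i < pass2 w" for i
    using tour_inj j that passes(2)[OF w] a_a[OF tour_in_darts] by (metis less_trans)
  ultimately show ?thesis unfolding loop_def by auto
qed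

lemma loop_edge_unions: "loop w \<in> edge_unions"
  unfolding loop_def edge_unions_def using a_a[OF tour_in_darts] a_in[OF tour_in_darts] tour_in_darts
  by auto

lemma crossing_by_passes:
  assumes v: "v \<in> V"
  shows "v = {tour (pass1 v), s (s (tour (pass1 v))), tour (pass2 v), s (s (tour (pass2 v)))}"
    "distinct [tour (pass1 v), s (s (tour (pass1 v))), tour (pass2 v), s (s (tour (pass2 v)))]"
proof -
  let ?x = "tour (pass1 v)"
  have x: "?x \<in> Dt" by (rule tour_in_darts)
  have v_eq: "v = {?x, s ?x, s (s ?x), s (s (s ?x))}"
    using crossing_eq_pass1[OF v] s_order_four(3)[OF x] by simp
  have dist: "distinct [?x, s ?x, s (s ?x), s (s (s ?x))]" using s_order_four(2)[OF x] .
  have "v = {?x, s (s ?x), tour (pass2 v), s (s (tour (pass2 v)))} \<and>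
    distinct [?x, s (s ?x), tour (pass2 v), s (s (tour (pass2 v)))]"
  proof (cases "tour (pass2 v) = s ?x")
    case True
    thus ?thesis using v_eq dist by (auto simp: insert_commute)
  next
    case False
    hence "tour (pass2 v) = s (s (s ?x))" using tour_pass2_cases[OF v] by simp
    moreover have "v = {?x, s (s ?x), s (s (s ?x)), s ?x}" using v_eq by (simp add: insert_commute)
    ultimately show ?thesis using dist s_order_four(1)[OF x] by auto
  qed
  thus "v = {?x, s (s ?x), tour (pass2 v), s (s (tour (pass2 v)))}"
    "distinct [?x, s (s ?x), tour (pass2 v), s (s (tour (pass2 v)))]" by auto
qed

lemma prev_pos_in_span_iff:
  assumes w: "w \<in> V" and j: "j < tour_len" "j \<noteq> pass1 w" "j \<noteq> pass2 w"
  shows "pass1 w \<le> prev_pos j \<and> prev_pos j < pass2 w \<longleftrightarrow> pass1 w \<le> j \<and> j < pass2 w"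
  using passes(1,2)[OF w] j unfolding prev_pos_def by auto

lemma prev_pos_pass1:
  assumes "w \<in> V"
  shows "\<not> (pass1 w \<le> prev_pos (pass1 w) \<and> prev_pos (pass1 w) < pass2 w)"
  using passes(1,2)[OF assms] unfolding prev_pos_def by auto

lemma prev_pos_pass2:
  assumes "w \<in> V"
  shows "pass1 w \<le> prev_pos (pass2 w) \<and> prev_pos (pass2 w) < pass2 w"
  using passes(1,2)[OF assms] unfolding prev_pos_def by auto

lemma odd_degree_loop:
  assumes w: "w \<in> V"
  shows "odd_degree (loop w) = {}"
proof -
  have "even (card (loop w \<inter> v))" if v: "v \<in> V" for v
  proof -
    let ?p = "pass1 v" and ?q = "pass2 v"
    have p: "?p < tour_len" and q: "?q < tour_len" using passes_less[OF v] by auto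
    have "card (loop w \<inter> v) =
        of_bool (pass1 w \<le> ?p \<and> ?p < pass2 w) + of_bool (pass1 w \<le> prev_pos ?p \<and> prev_pos ?p < pass2 w)
      + of_bool (pass1 w \<le> ?q \<and> ?q < pass2 w) + of_bool (pass1 w \<le> prev_pos ?q \<and> prev_pos ?q < pass2 w)"
      using card_Int_four[OF crossing_by_passes(2)[OF v], of "loop w"] crossing_by_passes(1)[OF v]
        tour_in_loop_iff[OF w p] tour_in_loop_iff[OF w q] s_s_tour[OF p] s_s_tour[OF q]
        a_tour_in_loop_iff[OF w prev_pos_less[OF p]] a_tour_in_loop_iff[OF w prev_pos_less[OF q]]
      by (simp add: Int_commute)
    moreover have "?p \<noteq> pass1 w \<and> ?p \<noteq> pass2 w \<and> ?q \<noteq> pass1 w \<and> ?q \<noteq> pass2 w" if "v \<noteq> w"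
      using passes_distinct[OF w v that] by blast
    ultimately show ?thesis
      using prev_pos_pass1[OF w] prev_pos_pass2[OF w] passes(1)[OF w]
        prev_pos_in_span_iff[OF w p] prev_pos_in_span_iff[OF w q]
      by (cases "v = w") auto
  qed
  thus ?thesis unfolding odd_degree_def by auto
qed

definition lobe_corner where
  "lobe_corner w =
    (if tour (pass2 w) = s (tour (pass1 w)) then tour (pass1 w) else s (tour (pass1 w)))"

definition lobe where
  "lobe w = (let Y = (SOME Y. Y \<in> region_unions \<and> boundary Y = loop w)
             in if lobe_corner w \<in> Y then Y else Dt - Y)"

lemma lobe_corner_in_darts: "lobe_corner w \<in> Dt"
  unfolding lobe_corner_def using tour_in_darts s_in by auto

lemma lobe_corner_in: "w \<in> V \<Longrightarrow> lobe_corner w \<in> w"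
  unfolding lobe_corner_def using tour_pass1 crossing_eq_pass1 S.orbit_step by metis

lemma s_lobe_corner_in: "w \<in> V \<Longrightarrow> s (lobe_corner w) \<in> w"
  using lobe_corner_in crossing_eq_crossing_of S.orbit_step S.orbit_self by metis

lemma lobe:
  assumes w: "w \<in> V"
  shows "lobe w \<in> region_unions" "boundary (lobe w) = loop w" "lobe_corner w \<in> lobe w"
proof -
  define Y where "Y = (SOME Y. Y \<in> region_unions \<and> boundary Y = loop w)"
  have "\<exists>Y. Y \<in> region_unions \<and> boundary Y = loop w"
    using even_cycle_is_boundary[OF loop_edge_unions odd_degree_loop[OF w]] by blast
  hence "Y \<in> region_unions \<and> boundary Y = loop w" unfolding Y_def by (rule someI_ex)
  hence Y: "Y \<in> region_unions" "boundary Y = loop w" by auto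
  have lobe: "lobe w = (if lobe_corner w \<in> Y then Y else Dt - Y)"
    unfolding lobe_def Y_def Let_def ..
  show "lobe w \<in> region_unions" using Y region_unions_compl lobe by auto
  show "boundary (lobe w) = loop w" using Y boundary_compl[OF region_unions_subset[OF Y(1)]] lobe by auto
  show "lobe_corner w \<in> lobe w" using lobe lobe_corner_in_darts by auto
qed

lemma boundary_lobe_iff:
  "w \<in> V \<Longrightarrow> d \<in> Dt \<Longrightarrow> (d \<in> lobe w) \<noteq> (s d \<in> lobe w) \<longleftrightarrow> d \<in> loop w"
  using boundary_iff_s[OF lobe(1)] lobe(2) by blast

lemma lobe_other_corners:
  assumes w: "w \<in> V"
  shows "s (lobe_corner w) \<notin> lobe w" "s (s (lobe_corner w)) \<notin> lobe w"
    "s (s (s (lobe_corner w))) \<notin> lobe w"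
proof -
  let ?p = "pass1 w" and ?q = "pass2 w"
  let ?x = "tour ?p" and ?y = "tour ?q"
  have p: "?p < tour_len" and q: "?q < tour_len" using passes_less[OF w] by auto
  have x: "?x \<in> Dt" using tour_in_darts .
  note flip = boundary_lobe_iff[OF w]
  have in_loop: "?x \<in> loop w" "?y \<notin> loop w" "s (s ?x) \<notin> loop w" "s (s ?y) \<in> loop w"
    using tour_in_loop_iff[OF w p] tour_in_loop_iff[OF w q] passes(1)[OF w]
      a_tour_in_loop_iff[OF w prev_pos_less[OF p]] s_s_tour[OF p] prev_pos_pass1[OF w]
      a_tour_in_loop_iff[OF w prev_pos_less[OF q]] s_s_tour[OF q] prev_pos_pass2[OF w] by auto
  have s4x: "s (s (s (s ?x))) = ?x" using s_order_four(1)[OF x] .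
  have "s (lobe_corner w) \<notin> lobe w \<and> s (s (lobe_corner w)) \<notin> lobe w \<and> s (s (s (lobe_corner w))) \<notin> lobe w"
  proof (cases "?y = s ?x")
    case True
    hence "lobe_corner w = ?x" unfolding lobe_corner_def by simp
    thus ?thesis using flip[OF x] flip[OF s_in[OF x]] flip[OF s_in[OF s_in[OF x]]] in_loop True
        lobe(3)[OF w] by auto
  next
    case False
    hence y: "?y = s (s (s ?x))" using tour_pass2_cases[OF w] by simp
    hence "lobe_corner w = s ?x" unfolding lobe_corner_def using False by simp
    thus ?thesis using flip[OF x] flip[OF s_in[OF x]] flip[OF s_in[OF s_in[OF x]]] in_loop y s4x
        lobe(3)[OF w] by auto
  qed
  thus "s (lobe_corner w) \<notin> lobe w" "s (s (lobe_corner w)) \<notin> lobe w"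
    "s (s (s (lobe_corner w))) \<notin> lobe w" by auto
qed

lemma lobe_at_crossing:
  assumes w: "w \<in> V" and d: "d \<in> w"
  shows "d \<in> lobe w \<longleftrightarrow> d = lobe_corner w"
proof -
  let ?g = "lobe_corner w"
  have "w = {?g, s ?g, s (s ?g), s (s (s ?g))}"
    using crossing_eq_crossing_of[OF w lobe_corner_in[OF w]] s_order_four(3)[OF lobe_corner_in_darts]
    by simp
  thus ?thesis using d lobe(3)[OF w] lobe_other_corners[OF w] by auto
qed

text \<open>A checkerboard colouring exists since all of \<open>Dt\<close> is an even cycle; hence the two
  corners on either side of an edge lie in different regions.\<close>

lemma region_of_s_neq:
  assumes d: "d \<in> Dt"
  shows "region_of d \<noteq> region_of (s d)"
proof
  assume eq: "region_of d = region_of (s d)"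
  have "Dt \<in> edge_unions" unfolding edge_unions_def using a_in by auto
  moreover have "odd_degree Dt = {}"
    unfolding odd_degree_def crossings_def using card_crossing S.orbit_subset by (auto simp: Int_absorb1)
  ultimately obtain Y where Y: "Y \<in> region_unions" "boundary Y = Dt"
    using even_cycle_is_boundary by blast
  hence "(d \<in> Y) \<noteq> (s d \<in> Y)" using boundary_iff_s[OF Y(1) d] d by simp
  thus False using region_unions_same_region[OF Y(1) d s_in[OF d] eq] by simp
qed

subsection \<open>Crossings flipped by region crossing changes\<close>

text \<open>Region crossing changes at all regions inside \<open>Y\<close> flip exactly the crossings in
  \<open>flipped Y\<close>; by linearity the question is whether \<open>flipped\<close> is onto \<open>Pow V\<close>.\<close>

definition flipped where
  "flipped Y = {v \<in> V. odd (card {F \<in> R. F \<subseteq> Y \<and> v \<inter> F \<noteq> {}})}"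

text \<open>A crossing is nugatory when one region touches it at two opposite corners.\<close>

definition nugatory where
  "nugatory w \<longleftrightarrow> region_of (s (lobe_corner w)) = region_of (s (s (s (lobe_corner w))))"

lemma region_subset_region_unions_iff:
  assumes "Y \<in> region_unions" "d \<in> Dt"
  shows "region_of d \<subseteq> Y \<longleftrightarrow> d \<in> Y"
proof -
  have "(s \<circ> a) ` Y \<subseteq> Y" using assms(1) unfolding region_unions_def by auto
  thus ?thesis using F.orbit_subset_closed F.orbit_self by blast
qed

lemma regions_touching_eq:
  assumes Y: "Y \<in> region_unions" and v: "v \<in> V"
  shows "{F \<in> R. F \<subseteq> Y \<and> v \<inter> F \<noteq> {}} = region_of ` (v \<inter> Y)"
proof
  show "{F \<in> R. F \<subseteq> Y \<and> v \<inter> F \<noteq> {}} \<subseteq> region_of ` (v \<inter> Y)"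
  proof
    fix F assume F: "F \<in> {F \<in> R. F \<subseteq> Y \<and> v \<inter> F \<noteq> {}}"
    then obtain x d where x: "x \<in> Dt" "F = region_of x" and d: "d \<in> v" "d \<in> F"
      unfolding regions_def by auto
    hence "region_of d = F" using F.orbit_eq by simp
    moreover have "d \<in> Y" using d(2) F by auto
    ultimately show "F \<in> region_of ` (v \<inter> Y)" using d(1) by auto
  qed
  show "region_of ` (v \<inter> Y) \<subseteq> {F \<in> R. F \<subseteq> Y \<and> v \<inter> F \<noteq> {}}"
    using crossing_subset[OF v] region_subset_region_unions_iff[OF Y] F.orbit_self
    unfolding regions_def by blast
qed

lemma regions_at_crossing:
  assumes w: "w \<in> V"
  defines "g \<equiv> lobe_corner w"
  shows "inj_on region_of {g, s g, s (s g)}" "\<not> nugatory w \<Longrightarrow> inj_on region_of w"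
proof -
  have g: "g \<in> Dt" unfolding g_def by (rule lobe_corner_in_darts)
  have gs: "s g \<in> Dt" "s (s g) \<in> Dt" "s (s (s g)) \<in> Dt" using g s_in by auto
  have "region_of g \<noteq> region_of d" if "d \<in> {s g, s (s g), s (s (s g))}" for d
    using region_unions_same_region[OF lobe(1)[OF w] g, of d] lobe(3)[OF w] lobe_other_corners[OF w]
      that gs unfolding g_def by blast
  hence f0: "region_of g \<noteq> region_of (s g)" "region_of g \<noteq> region_of (s (s g))"
    "region_of g \<noteq> region_of (s (s (s g)))" by auto
  have f12: "region_of (s g) \<noteq> region_of (s (s g))"
    and f23: "region_of (s (s g)) \<noteq> region_of (s (s (s g)))"
    using region_of_s_neq gs by auto
  show "inj_on region_of {g, s g, s (s g)}" unfolding inj_on_def using f0 f12 by auto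
  assume "\<not> nugatory w"
  hence "region_of (s g) \<noteq> region_of (s (s (s g)))" unfolding nugatory_def g_def .
  moreover have "w = {g, s g, s (s g), s (s (s g))}"
    using crossing_eq_crossing_of[OF w lobe_corner_in[OF w]] s_order_four(3)[OF g] unfolding g_def by simp
  ultimately show "inj_on region_of w" unfolding inj_on_def using f0 f12 f23 by auto
qed

lemma flipped_iff:
  assumes Y: "Y \<in> region_unions" and w: "w \<in> V"
  shows "w \<in> flipped Y \<longleftrightarrow> odd (card (w \<inter> Y)) \<noteq> (nugatory w \<and> s (lobe_corner w) \<in> Y)"
proof -
  define g where "g = lobe_corner w"
  have g: "g \<in> Dt" unfolding g_def by (rule lobe_corner_in_darts)
  have w_eq: "w = {g, s g, s (s g), s (s (s g))}"
    using crossing_eq_crossing_of[OF w lobe_corner_in[OF w]] s_order_four(3)[OF g] unfolding g_def by simp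
  have card_flipped: "w \<in> flipped Y \<longleftrightarrow> odd (card (region_of ` (w \<inter> Y)))"
    using regions_touching_eq[OF Y w] w unfolding flipped_def by simp
  show ?thesis
  proof (cases "nugatory w")
    case False
    hence "card (region_of ` (w \<inter> Y)) = card (w \<inter> Y)"
      using regions_at_crossing(2)[OF w] by (intro card_image) (auto intro: inj_on_subset)
    thus ?thesis using False card_flipped by simp
  next
    case True
    hence same: "region_of (s g) = region_of (s (s (s g)))" unfolding nugatory_def g_def by simp
    have eqv: "s g \<in> Y \<longleftrightarrow> s (s (s g)) \<in> Y"
      using region_unions_same_region[OF Y s_in[OF g] s_in[OF s_in[OF s_in[OF g]]] same] .
    let ?w' = "{g, s g, s (s g)}"
    have "region_of ` (w \<inter> Y) = region_of ` (?w' \<inter> Y)" using w_eq eqv same by auto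
    moreover have "card (region_of ` (?w' \<inter> Y)) = card (?w' \<inter> Y)"
      using regions_at_crossing(1)[OF w] unfolding g_def[symmetric]
      by (intro card_image) (auto intro: inj_on_subset)
    moreover have "card (w \<inter> Y) = card (?w' \<inter> Y) + of_bool (s g \<in> Y)"
    proof -
      have "w \<inter> Y = (?w' \<inter> Y) \<union> ({s (s (s g))} \<inter> Y)" using w_eq by auto
      moreover have "(?w' \<inter> Y) \<inter> ({s (s (s g))} \<inter> Y) = {}" using s_order_four(2)[OF g] by auto
      ultimately show ?thesis using eqv by (simp add: card_Un_disjoint)
    qed
    ultimately show ?thesis using True card_flipped unfolding g_def by auto
  qed
qed

lemma flipped_sym_diff:
  assumes Y: "Y \<in> region_unions" and Z: "Z \<in> region_unions"
  shows "flipped (sym_diff Y Z) = sym_diff (flipped Y) (flipped Z)"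
proof -
  have YZ: "sym_diff Y Z \<in> region_unions" using region_unions_sym_diff[OF Y Z] .
  have inside: "F \<subseteq> sym_diff Y Z \<longleftrightarrow> (F \<subseteq> Y) \<noteq> (F \<subseteq> Z)" if F: "F \<in> R" for F
  proof -
    obtain x where "x \<in> Dt" "F = region_of x" using F unfolding regions_def by auto
    thus ?thesis using region_subset_region_unions_iff[OF YZ] region_subset_region_unions_iff[OF Y]
        region_subset_region_unions_iff[OF Z] by auto
  qed
  have "{F \<in> R. F \<subseteq> sym_diff Y Z \<and> v \<inter> F \<noteq> {}}
      = sym_diff {F \<in> R. F \<subseteq> Y \<and> v \<inter> F \<noteq> {}} {F \<in> R. F \<subseteq> Z \<and> v \<inter> F \<noteq> {}}" for v
    using inside by blast
  hence "odd (card {F \<in> R. F \<subseteq> sym_diff Y Z \<and> v \<inter> F \<noteq> {}}) \<longleftrightarrow>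
      odd (card {F \<in> R. F \<subseteq> Y \<and> v \<inter> F \<noteq> {}}) \<noteq> odd (card {F \<in> R. F \<subseteq> Z \<and> v \<inter> F \<noteq> {}})" for v
    using odd_card_sym_diff[of "{F \<in> R. F \<subseteq> Y \<and> v \<inter> F \<noteq> {}}" "{F \<in> R. F \<subseteq> Z \<and> v \<inter> F \<noteq> {}}"]
      finite_regions by simp
  thus ?thesis unfolding flipped_def by blast
qed

subsection \<open>Nugatory crossings\<close>

text \<open>A crossing passed once inside and once outside the loop of \<open>w\<close> separates the two corners
  of its own that flank the loop; so a nugatory crossing is interlaced with no other crossing.
  Consequently the lobe of a nugatory crossing lies within its span of the tour, and the lobes of
  nugatory crossings are nested.\<close>

lemma neighbours_at_other_pass:
  assumes u: "u \<in> V" and jr: "j \<in> {pass1 u, pass2 u}" "r \<in> {pass1 u, pass2 u}" "r \<noteq> j"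
  shows "s (tour j) \<in> {tour r, s (s (tour r))}" "s (s (s (tour j))) \<in> {tour r, s (s (tour r))}"
proof -
  have "s (s (s (s (tour (pass1 u))))) = tour (pass1 u)" using s_order_four(1)[OF tour_in_darts] .
  hence "s (tour j) \<in> {tour r, s (s (tour r))} \<and> s (s (s (tour j))) \<in> {tour r, s (s (tour r))}"
    using tour_pass2_cases[OF u] jr by auto
  thus "s (tour j) \<in> {tour r, s (s (tour r))}" "s (s (s (tour j))) \<in> {tour r, s (s (tour r))}"
    by auto
qed

lemma outside_loop:
  assumes w: "w \<in> V" and r: "r < tour_len" "r < pass1 w \<or> pass2 w < r"
  shows "tour r \<notin> loop w" "s (s (tour r)) \<notin> loop w"
proof -
  show "tour r \<notin> loop w" using tour_in_loop_iff[OF w r(1)] r(2) by auto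
  have "\<not> (pass1 w \<le> prev_pos r \<and> prev_pos r < pass2 w)"
    using r passes(1,2)[OF w] unfolding prev_pos_def by auto
  thus "s (s (tour r)) \<notin> loop w" using a_tour_in_loop_iff[OF w prev_pos_less[OF r(1)]] s_s_tour[OF r(1)] by simp
qed

lemma inside_loop:
  assumes w: "w \<in> V" and r: "r < tour_len" "pass1 w < r" "r < pass2 w"
  shows "tour r \<in> loop w" "s (s (tour r)) \<in> loop w"
proof -
  show "tour r \<in> loop w" using tour_in_loop_iff[OF w r(1)] r(2,3) by auto
  have "pass1 w \<le> prev_pos r \<and> prev_pos r < pass2 w"
    using r passes(1,2)[OF w] unfolding prev_pos_def by auto
  thus "s (s (tour r)) \<in> loop w" using a_tour_in_loop_iff[OF w prev_pos_less[OF r(1)]] s_s_tour[OF r(1)] by simp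
qed

lemma split_not_nugatory:
  assumes v: "v \<in> V" and w: "w \<in> V" and r: "r \<in> {pass1 v, pass2 v}" "pass1 w < r" "r < pass2 w"
    and r': "r' \<in> {pass1 v, pass2 v}" "r' < pass1 w \<or> pass2 w < r'"
  shows "\<not> nugatory v"
proof
  assume nv: "nugatory v"
  let ?Y = "lobe w" and ?x = "tour r"
  have x: "?x \<in> Dt" by (rule tour_in_darts)
  have rr': "r' \<noteq> r" using r r' by auto
  have r_less: "r < tour_len" "r' < tour_len" using r(1) r'(1) passes_less[OF v] by auto
  have out: "s ?x \<notin> loop w" "s (s (s ?x)) \<notin> loop w"
    using neighbours_at_other_pass[OF v r(1) r'(1) rr'] outside_loop[OF w r_less(2) r'(2)] by auto
  have inside: "?x \<in> loop w" "s (s ?x) \<in> loop w" using inside_loop[OF w r_less(1) r(2,3)] by auto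
  have opposite: "(d \<in> ?Y) \<noteq> (s (s d) \<in> ?Y)" if d: "d \<in> v" for d
  proof -
    have "v = {?x, s ?x, s (s ?x), s (s (s ?x))}"
      using crossing_eq_crossing_of[OF v] tour_pass1[OF v] tour_pass2[OF v] r(1) s_order_four(3)[OF x]
      by auto
    hence "d = ?x \<or> d = s ?x \<or> d = s (s ?x) \<or> d = s (s (s ?x))" using d by blast
    moreover have "(?x \<in> ?Y) \<noteq> (s ?x \<in> ?Y)" "(s ?x \<in> ?Y) = (s (s ?x) \<in> ?Y)"
      "(s (s ?x) \<in> ?Y) \<noteq> (s (s (s ?x)) \<in> ?Y)"
      using boundary_lobe_iff[OF w] x s_in out inside by blast+
    ultimately show ?thesis using s_order_four(1)[OF x] by auto
  qed
  have "(s (lobe_corner v) \<in> ?Y) \<noteq> (s (s (s (lobe_corner v))) \<in> ?Y)"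
    using opposite[OF s_lobe_corner_in[OF v]] .
  moreover have "region_of (s (lobe_corner v)) = region_of (s (s (s (lobe_corner v))))"
    using nv unfolding nugatory_def .
  ultimately show False
    using region_unions_same_region[OF lobe(1)[OF w]] s_in lobe_corner_in_darts by metis
qed

lemma nugatory_not_interlaced:
  assumes v: "v \<in> V" and nv: "nugatory v" and w: "w \<in> V"
  shows "\<not> (pass1 v < pass1 w \<and> pass1 w < pass2 v \<and> pass2 v < pass2 w)"
        "\<not> (pass1 w < pass1 v \<and> pass1 v < pass2 w \<and> pass2 w < pass2 v)"
  using split_not_nugatory[OF v w, of "pass2 v" "pass1 v"] split_not_nugatory[OF v w, of "pass1 v" "pass2 v"]
    nv by auto

lemma lobe_step:
  assumes v: "v \<in> V" and i: "Suc i < tour_len" "\<not> (pass1 v \<le> i \<and> i < pass2 v)" "\<not> (pass1 v \<le> Suc i \<and> Suc i < pass2 v)"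
    and c: "s (tour (Suc i)) \<notin> loop v" "s (s (s (tour (Suc i)))) \<notin> loop v"
  shows "(tour i \<in> lobe v) = (tour (Suc i) \<in> lobe v)" "(a (tour i) \<in> lobe v) = (tour (Suc i) \<in> lobe v)"
        "(a (tour (Suc i)) \<in> lobe v) = (tour (Suc i) \<in> lobe v)"
proof -
  let ?Y = "lobe v" and ?e = "tour (Suc i)"
  have Y: "?Y \<in> region_unions" "boundary ?Y = loop v" using lobe[OF v] by auto
  have e: "?e \<in> Dt" by (rule tour_in_darts)
  have es: "s ?e \<in> Dt" "s (s ?e) \<in> Dt" "s (s (s ?e)) \<in> Dt" using s_in e by auto
  have fl: "\<And>d. d \<in> Dt \<Longrightarrow> ((d \<in> ?Y) \<noteq> (s d \<in> ?Y)) = (d \<in> loop v)"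
    using boundary_iff_s[OF Y(1)] Y(2) by simp
  have ii: "i < tour_len" using i(1) by simp
  have a2: "a (tour i) = s (s ?e)" using a_tour[of i] next_pos_Suc[OF i(1)] by simp
  have eK: "?e \<notin> loop v" using tour_in_loop_iff[OF v i(1)] i(3) by simp
  have e2K: "s (s ?e) \<notin> loop v" using a_tour_in_loop_iff[OF v ii] i(2) a2 by simp
  have F1: "(?e \<in> ?Y) = (s ?e \<in> ?Y)" using fl[OF e] eK by simp
  have F2: "(s ?e \<in> ?Y) = (s (s ?e) \<in> ?Y)" using fl[OF es(1)] c(1) by simp
  have F3: "(s (s ?e) \<in> ?Y) = (s (s (s ?e)) \<in> ?Y)" using fl[OF es(2)] e2K by simp
  have o3: "(tour i \<in> ?Y) = (s (s (s ?e)) \<in> ?Y)" using region_unions_s_a[OF Y(1) tour_in_darts[of i]] a2 by simp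
  show "(tour i \<in> ?Y) = (?e \<in> ?Y)" using o3 F1 F2 F3 by simp
  show "(a (tour i) \<in> ?Y) = (?e \<in> ?Y)" using a2 F1 F2 by simp
  show "(a ?e \<in> ?Y) = (?e \<in> ?Y)" using region_unions_a_s[OF Y(1) e] F1 by simp
qed

lemma outside_loop_neighbours:
  assumes v: "v \<in> V" and nv: "nugatory v" and k: "k < tour_len" "k < pass1 v \<or> pass2 v < k"
  shows "s (tour k) \<notin> loop v" "s (s (s (tour k))) \<notin> loop v"
proof -
  let ?u = "crossing_of (tour k)"
  have u: "?u \<in> V" using crossing_of_in[OF tour_in_darts] .
  have k_pass: "k \<in> {pass1 ?u, pass2 ?u}" using passes(3)[OF u k(1)] S.orbit_self by auto
  define r where "r = (if k = pass1 ?u then pass2 ?u else pass1 ?u)"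
  have r: "r \<in> {pass1 ?u, pass2 ?u}" "r \<noteq> k" "r < tour_len"
    using passes[OF u] passes_less[OF u] k_pass unfolding r_def by auto
  have "?u \<noteq> v" using passes(3)[OF v k(1)] passes(1)[OF v] k(2) S.orbit_self by auto
  hence "r \<noteq> pass1 v" "r \<noteq> pass2 v" using passes_distinct[OF v u] r(1) by auto
  moreover have "\<not> (pass1 v < r \<and> r < pass2 v)"
    using nugatory_not_interlaced[OF v nv u] k(2) k_pass r(1,2) passes(1)[OF u] by auto
  ultimately have "r < pass1 v \<or> pass2 v < r" by auto
  thus "s (tour k) \<notin> loop v" "s (s (s (tour k))) \<notin> loop v"
    using neighbours_at_other_pass[OF u k_pass r(1,2)] outside_loop[OF v r(3)] by auto
qed

lemma outside_lobe_step:
  assumes v: "v \<in> V" and nv: "nugatory v" and i: "Suc i < tour_len"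
    "\<not> (pass1 v \<le> i \<and> i < pass2 v)" "Suc i < pass1 v \<or> pass2 v < Suc i"
  shows "tour i \<notin> lobe v \<and> a (tour i) \<notin> lobe v \<longleftrightarrow>
    tour (Suc i) \<notin> lobe v \<and> a (tour (Suc i)) \<notin> lobe v"
proof -
  have "\<not> (pass1 v \<le> Suc i \<and> Suc i < pass2 v)" using i(3) by auto
  thus ?thesis using lobe_step[OF v i(1,2) _ outside_loop_neighbours[OF v nv i(1,3)]] by blast
qed

lemma lobe_at_pass2:
  assumes v: "v \<in> V"
  shows "tour (pass2 v) \<notin> lobe v \<and> a (tour (pass2 v)) \<notin> lobe v"
proof -
  let ?x = "tour (pass1 v)" and ?y = "tour (pass2 v)"
  have x: "?x \<in> Dt" using tour_in_darts .
  have dist: "distinct [?x, s ?x, s (s ?x), s (s (s ?x))]" using s_order_four(2)[OF x] .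
  have "v = {?x, s ?x, s (s ?x), s (s (s ?x))}"
    using crossing_eq_pass1[OF v] s_order_four(3)[OF x] by simp
  hence mem: "?x \<in> v" "s ?x \<in> v" "s (s ?x) \<in> v" "s (s (s ?x)) \<in> v" by auto
  have "?y \<notin> lobe v \<and> s ?y \<notin> lobe v"
  proof (cases "?y = s ?x")
    case True
    hence "lobe_corner v = ?x" unfolding lobe_corner_def by simp
    thus ?thesis using lobe_at_crossing[OF v mem(2)] lobe_at_crossing[OF v mem(3)] True dist by auto
  next
    case False
    hence "?y = s (s (s ?x))" "lobe_corner v = s ?x"
      using tour_pass2_cases[OF v] unfolding lobe_corner_def by auto
    thus ?thesis using lobe_at_crossing[OF v mem(4)] lobe_at_crossing[OF v mem(1)] dist
        s_order_four(1)[OF x] by auto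
  qed
  thus ?thesis using region_unions_a_s[OF lobe(1)[OF v] tour_in_darts] by simp
qed

lemma lobe_before_pass1:
  assumes v: "v \<in> V" and p: "0 < pass1 v"
  shows "tour (pass1 v - 1) \<notin> lobe v \<and> a (tour (pass1 v - 1)) \<notin> lobe v"
proof -
  let ?x = "tour (pass1 v)" and ?i = "pass1 v - 1"
  have x: "?x \<in> Dt" using tour_in_darts .
  have dist: "distinct [?x, s ?x, s (s ?x), s (s (s ?x))]" using s_order_four(2)[OF x] .
  have "v = {?x, s ?x, s (s ?x), s (s (s ?x))}"
    using crossing_eq_pass1[OF v] s_order_four(3)[OF x] by simp
  hence mem: "s (s ?x) \<in> v" "s (s (s ?x)) \<in> v" by auto
  have a_i: "a (tour ?i) = s (s ?x)"
    using a_tour[of ?i] next_pos_Suc[of ?i] p passes_less(1)[OF v] by simp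
  have "lobe_corner v = ?x \<or> lobe_corner v = s ?x" unfolding lobe_corner_def by auto
  hence "s (s ?x) \<notin> lobe v" "s (s (s ?x)) \<notin> lobe v"
    using lobe_at_crossing[OF v mem(1)] lobe_at_crossing[OF v mem(2)] dist by auto
  moreover have "tour ?i \<in> lobe v \<longleftrightarrow> s (s (s ?x)) \<in> lobe v"
    using region_unions_s_a[OF lobe(1)[OF v] tour_in_darts[of ?i]] a_i by simp
  ultimately show ?thesis using a_i by simp
qed

lemma outside_loop_notin_lobe:
  assumes v: "v \<in> V" and nv: "nugatory v" and j: "j < tour_len" "\<not> (pass1 v \<le> j \<and> j < pass2 v)"
  shows "tour j \<notin> lobe v \<and> a (tour j) \<notin> lobe v"
proof (cases "j < pass1 v")
  case True
  hence "j \<le> pass1 v - 1" by simp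
  thus ?thesis
  proof (induction j rule: inc_induct)
    case base
    show ?case using lobe_before_pass1[OF v] True by simp
  next
    case (step n)
    hence "Suc n < pass1 v" by simp
    moreover have "pass1 v < tour_len" using passes_less(1)[OF v] .
    ultimately show ?case using outside_lobe_step[OF v nv, of n] step by simp
  qed
next
  case False
  hence "pass2 v \<le> j" using j(2) by simp
  thus ?thesis using j(1)
  proof (induction j rule: dec_induct)
    case base
    show ?case using lobe_at_pass2[OF v] .
  next
    case (step n)
    thus ?case using outside_lobe_step[OF v nv, of n] by auto
  qed
qed

lemma nugatory_lobe_nested:
  assumes v: "v \<in> V" and nv: "nugatory v" and u: "u \<in> V" and uv: "u \<noteq> v"
    and h: "s (lobe_corner u) \<in> lobe v"
  shows "pass1 v < pass1 u \<and> pass2 u < pass2 v"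
proof -
  let ?p = "pass1 u" and ?q = "pass2 u"
  have pq: "?p < ?q" "?q < tour_len" "?p < tour_len" using passes[OF u] passes_less[OF u] by auto
  have d: "pass1 u \<noteq> pass1 v" "pass1 u \<noteq> pass2 v" "pass2 u \<noteq> pass1 v" "pass2 u \<noteq> pass2 v"
    using passes_distinct[OF v u uv] by auto
  have some_in: "(pass1 v < ?p \<and> ?p < pass2 v) \<or> (pass1 v < ?q \<and> ?q < pass2 v)"
  proof (rule ccontr)
    assume "\<not> ?thesis"
    hence op: "?p < pass1 v \<or> pass2 v < ?p" "?q < pass1 v \<or> pass2 v < ?q" using d by auto
    have ue: "u = {tour ?p, s (s (tour ?p)), tour ?q, s (s (tour ?q))}" by (rule crossing_by_passes(1)[OF u])
    have n1: "tour ?p \<notin> lobe v" using outside_loop_notin_lobe[OF v nv pq(3)] op(1) by auto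
    have n2: "tour ?q \<notin> lobe v" using outside_loop_notin_lobe[OF v nv pq(2)] op(2) by auto
    have "\<not> (pass1 v \<le> prev_pos ?p \<and> prev_pos ?p < pass2 v)" using op(1) passes[OF v] pq unfolding prev_pos_def by auto
    hence n3: "s (s (tour ?p)) \<notin> lobe v" using outside_loop_notin_lobe[OF v nv prev_pos_less[OF pq(3)]] s_s_tour[OF pq(3)] by auto
    have "\<not> (pass1 v \<le> prev_pos ?q \<and> prev_pos ?q < pass2 v)" using op(2) passes[OF v] pq unfolding prev_pos_def by auto
    hence n4: "s (s (tour ?q)) \<notin> lobe v" using outside_loop_notin_lobe[OF v nv prev_pos_less[OF pq(2)]] s_s_tour[OF pq(2)] by auto
    have "s (lobe_corner u) \<in> {tour ?p, s (s (tour ?p)), tour ?q, s (s (tour ?q))}"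
      using subst[OF ue, of "\<lambda>X. s (lobe_corner u) \<in> X"] s_lobe_corner_in[OF u] by blast
    thus False using n1 n2 n3 n4 h by auto
  qed
  show ?thesis
  proof (cases "pass1 v < ?p \<and> ?p < pass2 v")
    case True
    hence "\<not> pass2 v < ?q" using nugatory_not_interlaced(1)[OF v nv u] by auto
    thus ?thesis using True d by auto
  next
    case False
    hence i: "pass1 v < ?q" "?q < pass2 v" using some_in by auto
    hence "\<not> ?p < pass1 v" using nugatory_not_interlaced(2)[OF v nv u] by auto
    thus ?thesis using i d by auto
  qed
qed

subsection \<open>The kernel of \<open>flipped\<close>\<close>

text \<open>For \<open>U\<close> in the kernel of \<open>flipped\<close>, \<open>flipped_iff\<close> says that \<open>U\<close> meets a crossing in an odd
  number of corners exactly at the \<open>marked\<close> crossings. Adding the lobes of the marked crossings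
  gives a union of regions whose boundary does not change along the tour, so it is empty or all
  of \<open>Dt\<close>. This correction is additive and injective (at a marked crossing of widest span the
  nesting of lobes leaves no lobe to cover its corner), so the kernel has at most four elements.\<close>

definition marked where "marked U = {v \<in> V. nugatory v \<and> s (lobe_corner v) \<in> U}"
definition lobe_sum where "lobe_sum S = {d \<in> Dt. odd (card {v \<in> S. d \<in> lobe v})}"
definition corrected where "corrected U = sym_diff U (lobe_sum (marked U))"

lemma marked_subset: "marked U \<subseteq> V" unfolding marked_def by auto
lemma marked_sym_diff: "marked (sym_diff U U') = sym_diff (marked U) (marked U')" unfolding marked_def by auto

lemma lobe_sum_region_unions: assumes S: "S \<subseteq> V" shows "lobe_sum S \<in> region_unions"
proof -
  have "(s \<circ> a) ` lobe_sum S \<subseteq> lobe_sum S"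
  proof
    fix e assume "e \<in> (s \<circ> a) ` lobe_sum S"
    then obtain d where d: "d \<in> lobe_sum S" "e = s (a d)" by auto
    have dD: "d \<in> Dt" using d unfolding lobe_sum_def by auto
    have "{v \<in> S. e \<in> lobe v} = {v \<in> S. d \<in> lobe v}"
      using region_unions_s_a[OF lobe(1) dD] S d(2) by auto
    thus "e \<in> lobe_sum S" using d dD s_in a_in unfolding lobe_sum_def by auto
  qed
  thus ?thesis unfolding region_unions_def lobe_sum_def by auto
qed

lemma lobe_sum_sym_diff:
  assumes S: "S \<subseteq> V" and T: "T \<subseteq> V"
  shows "lobe_sum (sym_diff S T) = sym_diff (lobe_sum S) (lobe_sum T)"
proof -
  have "{v \<in> sym_diff S T. d \<in> lobe v} = sym_diff {v \<in> S. d \<in> lobe v} {v \<in> T. d \<in> lobe v}" for d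
    by auto
  hence "odd (card {v \<in> sym_diff S T. d \<in> lobe v}) \<longleftrightarrow>
      odd (card {v \<in> S. d \<in> lobe v}) \<noteq> odd (card {v \<in> T. d \<in> lobe v})" for d
    using odd_card_sym_diff[of "{v \<in> S. d \<in> lobe v}" "{v \<in> T. d \<in> lobe v}"]
      finite_subset[OF S finite_crossings] finite_subset[OF T finite_crossings] by simp
  thus ?thesis unfolding lobe_sum_def by blast
qed

lemma lobe_sum_empty: "lobe_sum {} = {}" unfolding lobe_sum_def by simp

lemma corrected_sym_diff: "corrected (sym_diff U U') = sym_diff (corrected U) (corrected U')"
  unfolding corrected_def marked_sym_diff lobe_sum_sym_diff[OF marked_subset marked_subset] by auto

lemma corrected_region_unions: "U \<in> region_unions \<Longrightarrow> corrected U \<in> region_unions"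
  unfolding corrected_def using region_unions_sym_diff lobe_sum_region_unions[OF marked_subset] by blast

lemma boundary_lobe_sum:
  assumes S: "S \<subseteq> V" and d: "d \<in> Dt"
  shows "(d \<in> boundary (lobe_sum S)) = odd (card {v \<in> S. d \<in> loop v})"
proof -
  have "(d \<in> boundary (lobe_sum S)) = (odd (card {v \<in> S. d \<in> lobe v}) \<noteq> odd (card {v \<in> S. a d \<in> lobe v}))"
    unfolding boundary_def lobe_sum_def using d a_in by auto
  also have "\<dots> = odd (card {v \<in> S. (d \<in> lobe v) \<noteq> (a d \<in> lobe v)})"
    using odd_card_filter_neq[OF finite_subset[OF S finite_crossings]] by simp
  also have "{v \<in> S. (d \<in> lobe v) \<noteq> (a d \<in> lobe v)} = {v \<in> S. d \<in> loop v}"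
    using lobe(2) S d unfolding boundary_def by auto
  finally show ?thesis .
qed

lemma loop_step:
  assumes v: "v \<in> V" and j: "j < tour_len"
  shows "((tour j \<in> loop v) \<noteq> (tour (next_pos j) \<in> loop v)) = (tour (next_pos j) \<in> v)"
proof -
  have pq: "pass1 v < pass2 v" "pass2 v < tour_len" using passes[OF v] by auto
  have n: "next_pos j < tour_len" using next_pos_less[OF j] .
  show ?thesis
  proof (cases "Suc j = tour_len")
    case True
    hence "next_pos j = 0" unfolding next_pos_def by simp
    thus ?thesis using tour_in_loop_iff[OF v j] tour_in_loop_iff[OF v n] passes(3)[OF v n] pq True by auto
  next
    case False
    hence "next_pos j = Suc j" unfolding next_pos_def by simp
    thus ?thesis using tour_in_loop_iff[OF v j] tour_in_loop_iff[OF v n] passes(3)[OF v n] pq by auto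
  qed
qed

lemma boundary_step:
  assumes U: "U \<in> region_unions" and j: "j < tour_len"
  shows "((tour j \<in> boundary U) \<noteq> (tour (next_pos j) \<in> boundary U)) = odd (card (crossing_of (tour (next_pos j)) \<inter> U))"
proof -
  let ?e = "tour (next_pos j)"
  have e: "?e \<in> Dt" by (rule tour_in_darts)
  have es: "s ?e \<in> Dt" "s (s ?e) \<in> Dt" "s (s (s ?e)) \<in> Dt" using s_in e by auto
  have a2: "a (tour j) = s (s ?e)" by (rule a_tour)
  have b1: "(tour j \<in> boundary U) = ((s (s (s ?e)) \<in> U) \<noteq> (s (s ?e) \<in> U))"
    using region_unions_s_a[OF U tour_in_darts[of j]] a2 tour_in_darts unfolding boundary_def by auto
  have b2: "(?e \<in> boundary U) = ((?e \<in> U) \<noteq> (s ?e \<in> U))"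
    using region_unions_a_s[OF U e] e unfolding boundary_def by auto
  have "card (crossing_of ?e \<inter> U) = card ({?e, s ?e, s (s ?e), s (s (s ?e))} \<inter> U)"
    using s_order_four(3)[OF e] by simp
  also have "\<dots> = of_bool (?e \<in> U) + of_bool (s ?e \<in> U) + of_bool (s (s ?e) \<in> U) + of_bool (s (s (s ?e)) \<in> U)"
    by (rule card_Int_four[OF s_order_four(2)[OF e]])
  finally have c: "card (crossing_of ?e \<inter> U) = \<dots>" .
  show ?thesis unfolding b1 b2 c by (cases "?e \<in> U"; cases "s ?e \<in> U"; cases "s (s ?e) \<in> U"; cases "s (s (s ?e)) \<in> U") auto
qed

lemma kernel_parity:
  assumes U: "U \<in> region_unions" "flipped U = {}" and w: "w \<in> V"
  shows "odd (card (w \<inter> U)) = (w \<in> marked U)"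
  using flipped_iff[OF U(1) w] U(2) w unfolding marked_def by auto

lemma boundary_corrected_step:
  assumes U: "U \<in> region_unions" "flipped U = {}" and j: "j < tour_len"
  shows "(tour j \<in> boundary (corrected U)) = (tour (next_pos j) \<in> boundary (corrected U))"
proof -
  let ?S = "marked U" and ?e = "tour (next_pos j)"
  let ?u = "crossing_of ?e"
  have u: "?u \<in> V" using crossing_of_in[OF tour_in_darts] .
  have c1: "((tour j \<in> boundary U) \<noteq> (?e \<in> boundary U)) = (?u \<in> ?S)"
    using boundary_step[OF U(1) j] kernel_parity[OF U u] by simp
  have "((tour j \<in> boundary (lobe_sum ?S)) \<noteq> (?e \<in> boundary (lobe_sum ?S))) =
        (odd (card {v \<in> ?S. tour j \<in> loop v}) \<noteq> odd (card {v \<in> ?S. ?e \<in> loop v}))"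
    using boundary_lobe_sum[OF marked_subset tour_in_darts] by simp
  also have "\<dots> = odd (card {v \<in> ?S. (tour j \<in> loop v) \<noteq> (?e \<in> loop v)})"
    using odd_card_filter_neq[OF finite_subset[OF marked_subset finite_crossings]] by simp
  also have "{v \<in> ?S. (tour j \<in> loop v) \<noteq> (?e \<in> loop v)} = {v \<in> ?S. ?e \<in> v}"
    using loop_step[OF _ j] marked_subset by blast
  also have "{v \<in> ?S. ?e \<in> v} = (if ?u \<in> ?S then {?u} else {})"
    using crossing_eq_crossing_of marked_subset S.orbit_self by auto
  finally have c2: "((tour j \<in> boundary (lobe_sum ?S)) \<noteq> (?e \<in> boundary (lobe_sum ?S))) = (?u \<in> ?S)" by simp
  show ?thesis unfolding corrected_def boundary_sym_diff using c1 c2 by auto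
qed

lemma boundary_corrected:
  assumes U: "U \<in> region_unions" "flipped U = {}"
  shows "boundary (corrected U) = {} \<or> boundary (corrected U) = Dt"
proof -
  let ?B = "boundary (corrected U)"
  have all: "\<forall>j<tour_len. (tour j \<in> ?B) = (tour 0 \<in> ?B)"
  proof (intro allI)
    fix j show "j < tour_len \<longrightarrow> (tour j \<in> ?B) = (tour 0 \<in> ?B)"
    proof (induction j)
      case (Suc j)
      show ?case
      proof
        assume lt: "Suc j < tour_len"
        have "(tour j \<in> ?B) = (tour (next_pos j) \<in> ?B)" using boundary_corrected_step[OF U] lt by simp
        thus "(tour (Suc j) \<in> ?B) = (tour 0 \<in> ?B)" using Suc lt next_pos_Suc[OF lt] by simp
      qed
    qed simp
  qed
  have "a ` ?B \<subseteq> ?B" using boundary_edge_unions[of "corrected U"] unfolding edge_unions_def by blast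
  hence "d \<in> ?B \<longleftrightarrow> tour 0 \<in> ?B" if "d \<in> Dt" for d
    using dart_cases[OF that] all A.closed_iff[OF _ tour_in_darts] by auto
  moreover have "?B \<subseteq> Dt" unfolding boundary_def by auto
  ultimately show ?thesis by (cases "tour 0 \<in> ?B") auto
qed

lemma lobe_sum_fixpoint:
  assumes U: "U \<in> region_unions" and eq: "U = lobe_sum (marked U)"
  shows "U = {}"
proof (cases "marked U = {}")
  case True thus ?thesis using eq lobe_sum_empty by simp
next
  case False
  let ?S = "marked U"
  have fS: "finite ?S" using finite_subset[OF marked_subset finite_crossings] .
  let ?m = "Max ((\<lambda>v. pass2 v - pass1 v) ` ?S)"
  have "?m \<in> (\<lambda>v. pass2 v - pass1 v) ` ?S" by (rule Max_in) (use fS False in auto)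
  then obtain u where u: "u \<in> ?S" "pass2 u - pass1 u = ?m" by auto
  have mx: "\<And>v. v \<in> ?S \<Longrightarrow> pass2 v - pass1 v \<le> ?m" using fS by simp
  have uV: "u \<in> V" and nu: "nugatory u" and su: "s (lobe_corner u) \<in> U" using u(1) unfolding marked_def by auto
  have "s (lobe_corner u) \<in> lobe_sum ?S" using su eq by simp
  hence "odd (card {v \<in> ?S. s (lobe_corner u) \<in> lobe v})" unfolding lobe_sum_def by auto
  hence "{v \<in> ?S. s (lobe_corner u) \<in> lobe v} \<noteq> {}" by (metis card.empty odd_card_imp_not_empty)
  then obtain v where v: "v \<in> ?S" "s (lobe_corner u) \<in> lobe v" by auto
  have vV: "v \<in> V" and nv: "nugatory v" using v(1) unfolding marked_def by auto
  have uv: "u \<noteq> v" using v(2) lobe_other_corners(1)[OF uV] by auto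
  have "pass1 v < pass1 u \<and> pass2 u < pass2 v" using nugatory_lobe_nested[OF vV nv uV uv v(2)] .
  moreover have "pass1 u < pass2 u" using passes(1)[OF uV] .
  ultimately have "pass2 u - pass1 u < pass2 v - pass1 v" by arith
  thus ?thesis using mx[OF v(1)] u(2) by simp
qed

lemma card_flipped_kernel: "card {U \<in> region_unions. flipped U = {}} \<le> 4"
proof -
  let ?kT = "{U \<in> region_unions. flipped U = {}}"
  let ?Q = "{Z \<in> region_unions. boundary Z \<in> {{}, Dt}}"
  have inj: "inj_on corrected ?kT"
  proof (rule inj_onI)
    fix U1 U2 assume U1: "U1 \<in> ?kT" and U2: "U2 \<in> ?kT" and eq: "corrected U1 = corrected U2"
    let ?D = "sym_diff U1 U2"
    have D: "?D \<in> region_unions" using region_unions_sym_diff U1 U2 by auto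
    have "corrected ?D = {}" using corrected_sym_diff eq by simp
    hence "?D = lobe_sum (marked ?D)" unfolding corrected_def by auto
    hence "?D = {}" using lobe_sum_fixpoint[OF D] by simp
    thus "U1 = U2" by auto
  qed
  have img: "corrected ` ?kT \<subseteq> ?Q" using corrected_region_unions boundary_corrected by auto
  have "card ?kT \<le> card ?Q"
    using card_inj_on_le[OF inj img] finite_region_unions by simp
  also have "\<dots> = card ({{}, Dt} \<inter> boundary ` region_unions) * card {Z \<in> region_unions. boundary Z = {}}"
    by (rule card_preimage_eq[OF finite_region_unions region_unions_sym_diff boundary_sym_diff]) auto
  also have "\<dots> \<le> 2 * 2"
  proof (rule mult_le_mono)
    have "card ({{}, Dt} \<inter> boundary ` region_unions) \<le> card {{}, Dt}" by (rule card_mono) auto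
    also have "\<dots> \<le> 2" by (simp add: card_insert_if)
    finally show "card ({{}, Dt} \<inter> boundary ` region_unions) \<le> 2" .
  qed (rule card_boundary_kernel)
  finally show ?thesis by simp
qed

lemma flipped_surj: "flipped ` region_unions = Pow V"
proof -
  have h: "card region_unions = card (flipped ` region_unions) * card {U \<in> region_unions. flipped U = {}}"
    by (rule card_eq_image_times_kernel[OF finite_region_unions region_unions_sym_diff flipped_sym_diff])
  have "2 ^ card R \<le> card (flipped ` region_unions) * 4"
    using h mult_le_mono2[OF card_flipped_kernel, of "card (flipped ` region_unions)"] card_region_unions by simp
  hence "4 * 2 ^ card V \<le> card (flipped ` region_unions) * 4" using card_regions by (simp add: power_add)
  hence le: "2 ^ card V \<le> card (flipped ` region_unions)" by simp
  have sub: "flipped ` region_unions \<subseteq> Pow V" unfolding flipped_def by auto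
  have cP: "card (Pow V) = 2 ^ card V" using finite_crossings by (simp add: card_Pow)
  have fP: "finite (Pow V)" using finite_crossings by simp
  have "card (flipped ` region_unions) \<le> card (Pow V)" using card_mono[OF fP sub] .
  hence "card (flipped ` region_unions) = card (Pow V)" using le cP by simp
  thus ?thesis using card_subset_eq[OF fP sub] by simp
qed

lemma flipped_singleton:
  assumes "c \<in> V"
  obtains U where "U \<in> region_unions" "flipped U = {c}"
  using flipped_surj assms by (metis Pow_iff empty_subsetI image_iff insert_subset)

lemma region_cc_realizes_crossing_change:
  assumes c: "c \<in> V"
  obtains rs where "set rs \<subseteq> R" "fold (region_cc s Dt) rs ov = crossing_change c ov"
proof -
  obtain U where U: "U \<in> region_unions" "flipped U = {c}" using flipped_singleton[OF c] .
  obtain rs where rs: "set rs = {F \<in> R. F \<subseteq> U}" "distinct rs"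
    using finite_distinct_list[of "{F \<in> R. F \<subseteq> U}"] finite_regions by auto
  have "odd (length (filter (touches v) rs)) \<longleftrightarrow> v = c" if v: "v \<in> V" for v
  proof -
    have "length (filter (touches v) rs) = card ({r. touches v r} \<inter> {F \<in> R. F \<subseteq> U})"
      using distinct_length_filter[OF rs(2)] rs(1) by simp
    also have "{r. touches v r} \<inter> {F \<in> R. F \<subseteq> U} = {F \<in> R. F \<subseteq> U \<and> v \<inter> F \<noteq> {}}"
      unfolding touches_def by auto
    finally have "length (filter (touches v) rs) = card {F \<in> R. F \<subseteq> U \<and> v \<inter> F \<noteq> {}}" .
    thus ?thesis using U(2) v unfolding flipped_def by auto
  qed
  hence "fold (region_cc s Dt) rs ov = crossing_change c ov"
    using c unfolding fold_region_cc crossing_change_def by (auto simp: fun_eq_iff)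
  thus ?thesis using that rs(1) by blast
qed

end

theorem theorem3p4:
  fixes Dt :: "'d set" and s a :: "'d \<Rightarrow> 'd" and ov :: "'d set \<Rightarrow> bool"
  assumes "knot_projection Dt s a"
    and "\<exists>Rs. ineffective Dt s a ov Rs \<and> odd (card Rs)"
    and "c \<in> crossings s Dt"
  shows "\<exists>rs. set rs \<subseteq> regions s a Dt \<and>
           fold (region_freeze_cc s Dt) rs ov = crossing_change c ov"
proof -
  interpret knot_diagram Dt s a by unfold_locales (fact assms(1))
  obtain Rs where Rs: "ineffective Dt s a ov Rs" "odd (card Rs)" using assms(2) by blast
  have "finite Rs" using Rs(1) finite_regions finite_subset unfolding ineffective_def by blast
  then obtain rl where rl: "set rl = Rs" "distinct rl" using finite_distinct_list by blast
  obtain rs where rs: "set rs \<subseteq> R" "fold (region_cc s Dt) rs ov = crossing_change c ov"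
    using region_cc_realizes_crossing_change[OF assms(3)] .
  define rs' where "rs' = (if even (length rs) then rs else rs @ rl)"
  have "set rs' \<subseteq> R" using rs(1) rl(1) Rs(1) unfolding rs'_def ineffective_def by auto
  moreover have "even (length rs')"
    using Rs(2) distinct_card[OF rl(2)] rl(1) unfolding rs'_def by auto
  moreover have "fold (region_cc s Dt) rs' ov = crossing_change c ov"
    using fold_region_cc_append_ineffective[OF Rs(1) rl(2,1), of rs ov] rs(2) unfolding rs'_def by simp
  ultimately show ?thesis using fold_region_freeze_cc_even by metis
qed

end
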